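(* Let $P$ be any polyhedral map of genus 1 all of whose faces have size 6. Then every Goldberg-Coxeter operation $\mathrm{GC}(l,l)$ or $\mathrm{GC}(l,0)$ ($l$ a positive integer) other than the identity $\mathrm{GC}(1,0)$ increases the symmetry of $P$, i.e. $|\mathrm{Aut}(\mathrm{GC}(l,m)(P))|>|\mathrm{Aut}(P)|$.
   Context: A polyhedral map is a 3-connected graph embedded in a closed orientable surface such that every face is an open disc and the closures of any two faces have connected intersection; its genus is that of the surface; $\mathrm{Aut}(P)$ is its automorphism group. Barycentric subdivision $B_P$: add a vertex in every face and on every edge, join each face-vertex to the vertices and edge-vertices on its boundary; colour original vertices 0, edge-vertices 1, face-vertices 2; the triangles are chambers. Goldberg-Coxeter operations: let $T_H$ be the regular hexagonal tiling of the plane with coordinates where $(0,0)$ is the centre of a face $f$, $(0,1)$ is a vertex of $f$ and $(1,0)$ is the vertex of $f$ preceding $(0,1)$ clockwise on its boundary (integer point $(x,y)$ is a face centre iff $x-y\equiv0\pmod3$, a vertex otherwise). For $l\ge1$ and $m\in\{0,l\}$, $\mathrm{GC}(l,m)$ is the coloured triangle cut out of $B_{T_H}$ with corners $v_0=(l,m)$, $v_1=(\frac{l-m}{2},\frac{l+2m}{2})$, $v_2=(0,0)$. It is applied to $P$ by gluing into every chamber of $B_P$ a copy of it or its mirror image (adjacent chambers receiving mirror images), identifying $v_i$ with the colour-$i$ vertex of the chamber and the boundary path of the triangle between $v_i$ and $v_j$ with the chamber edge between its colour-$i$ and colour-$j$ vertices; the result is the barycentric subdivision of a map $\mathrm{GC}(l,m)(P)$.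 Each automorphism of $P$ induces one of $\mathrm{GC}(l,m)(P)$, so $|\mathrm{Aut}(P)|\le|\mathrm{Aut}(\mathrm{GC}(l,m)(P))|$. *)

theory Defs
  imports Main
begin

text \<open>A map on a closed surface is encoded by its set of flags (= chambers of the
barycentric subdivision) F together with the three involutions r 0, r 1, r 2:
r i x is the chamber sharing with x all vertices except the one of colour i
(colour 0 = vertex, 1 = edge, 2 = face).\<close>

definition flag_step :: "'a set \<Rightarrow> (nat \<Rightarrow> 'a \<Rightarrow> 'a) \<Rightarrow> nat set \<Rightarrow> ('a \<times> 'a) set" where
  "flag_step F r I = {(x, r i x) | x i. x \<in> F \<and> i \<in> I}"

definition orbit_of :: "'a set \<Rightarrow> (nat \<Rightarrow> 'a \<Rightarrow> 'a) \<Rightarrow> nat set \<Rightarrow> 'a \<Rightarrow> 'a set" where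
  "orbit_of F r I x = (flag_step F r I)\<^sup>* `` {x}"

definition flag_map :: "'a set \<Rightarrow> (nat \<Rightarrow> 'a \<Rightarrow> 'a) \<Rightarrow> bool" where
  "flag_map F r \<longleftrightarrow> finite F \<and> F \<noteq> {} \<and>
     (\<forall>i<3. \<forall>x\<in>F. r i x \<in> F \<and> r i (r i x) = x \<and> r i x \<noteq> x) \<and>
     (\<forall>x\<in>F. r 0 (r 2 x) = r 2 (r 0 x) \<and> r 0 (r 2 x) \<noteq> x) \<and>
     (\<forall>x\<in>F. \<forall>y\<in>F. (x, y) \<in> (flag_step F r {0,1,2})\<^sup>*)"

definition vcl :: "'a set \<Rightarrow> (nat \<Rightarrow> 'a \<Rightarrow> 'a) \<Rightarrow> 'a \<Rightarrow> 'a set" where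
  "vcl F r x = orbit_of F r {1,2} x"
definition ecl :: "'a set \<Rightarrow> (nat \<Rightarrow> 'a \<Rightarrow> 'a) \<Rightarrow> 'a \<Rightarrow> 'a set" where
  "ecl F r x = orbit_of F r {0,2} x"
definition fcl :: "'a set \<Rightarrow> (nat \<Rightarrow> 'a \<Rightarrow> 'a) \<Rightarrow> 'a \<Rightarrow> 'a set" where
  "fcl F r x = orbit_of F r {0,1} x"

definition map_vertices :: "'a set \<Rightarrow> (nat \<Rightarrow> 'a \<Rightarrow> 'a) \<Rightarrow> 'a set set" where
  "map_vertices F r = vcl F r ` F"
definition map_edges :: "'a set \<Rightarrow> (nat \<Rightarrow> 'a \<Rightarrow> 'a) \<Rightarrow> 'a set set" where
  "map_edges F r = ecl F r ` F"
definition map_faces :: "'a set \<Rightarrow> (nat \<Rightarrow> 'a \<Rightarrow> 'a) \<Rightarrow> 'a set set" where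
  "map_faces F r = fcl F r ` F"

text \<open>Size of a face = number of edges on its boundary walk = half its number of flags.\<close>
definition face_size :: "'a set \<Rightarrow> nat" where
  "face_size f = card f div 2"

definition orientable_map :: "'a set \<Rightarrow> (nat \<Rightarrow> 'a \<Rightarrow> 'a) \<Rightarrow> bool" where
  "orientable_map F r \<longleftrightarrow> (\<exists>s :: 'a \<Rightarrow> bool. \<forall>x\<in>F. \<forall>i<3. s (r i x) \<noteq> s x)"

definition euler_char :: "'a set \<Rightarrow> (nat \<Rightarrow> 'a \<Rightarrow> 'a) \<Rightarrow> int" where
  "euler_char F r = int (card (map_vertices F r)) - int (card (map_edges F r))
                    + int (card (map_faces F r))"

definition map_genus :: "'a set \<Rightarrow> (nat \<Rightarrow> 'a \<Rightarrow> 'a) \<Rightarrow> nat \<Rightarrow> bool" where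
  "map_genus F r g \<longleftrightarrow> orientable_map F r \<and> euler_char F r = 2 - 2 * int g"

definition connected_on :: "'b set \<Rightarrow> ('b \<times> 'b) set \<Rightarrow> bool" where
  "connected_on U R \<longleftrightarrow> (\<forall>u\<in>U. \<forall>w\<in>U. (u, w) \<in> (R \<inter> U \<times> U)\<^sup>*)"

definition graph_adj :: "'a set \<Rightarrow> (nat \<Rightarrow> 'a \<Rightarrow> 'a) \<Rightarrow> ('a set \<times> 'a set) set" where
  "graph_adj F r = {(vcl F r x, vcl F r (r 0 x)) | x. x \<in> F}"

definition simple_underlying_graph :: "'a set \<Rightarrow> (nat \<Rightarrow> 'a \<Rightarrow> 'a) \<Rightarrow> bool" where
  "simple_underlying_graph F r \<longleftrightarrow>
     (\<forall>x\<in>F. vcl F r x \<noteq> vcl F r (r 0 x)) \<and>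
     (\<forall>x\<in>F. \<forall>y\<in>F. {vcl F r x, vcl F r (r 0 x)} = {vcl F r y, vcl F r (r 0 y)}
                     \<longrightarrow> ecl F r x = ecl F r y)"

definition three_connected :: "'a set \<Rightarrow> (nat \<Rightarrow> 'a \<Rightarrow> 'a) \<Rightarrow> bool" where
  "three_connected F r \<longleftrightarrow> simple_underlying_graph F r \<and> card (map_vertices F r) \<ge> 4 \<and>
     (\<forall>S \<subseteq> map_vertices F r. card S \<le> 2 \<longrightarrow>
        connected_on (map_vertices F r - S) (graph_adj F r))"

text \<open>The closure of a face consists of the face and the vertices and edges incident to it
(i.e. sharing a flag with it).  For two distinct faces the intersection of the closures is the
union of the common vertices and the (closed) common edges; it is connected iff the graph with
the common vertices and common edges is connected.\<close>
definition face_closures_ok :: "'a set \<Rightarrow> (nat \<Rightarrow> 'a \<Rightarrow> 'a) \<Rightarrow> bool" where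
  "face_closures_ok F r \<longleftrightarrow>
     (\<forall>f1\<in>map_faces F r. \<forall>f2\<in>map_faces F r. f1 \<noteq> f2 \<longrightarrow>
        (let CV = {v \<in> map_vertices F r. v \<inter> f1 \<noteq> {} \<and> v \<inter> f2 \<noteq> {}};
             CE = {e \<in> map_edges F r. e \<inter> f1 \<noteq> {} \<and> e \<inter> f2 \<noteq> {}}
         in connected_on CV {(vcl F r x, vcl F r (r 0 x)) | x. x \<in> F \<and> ecl F r x \<in> CE}))"

definition polyhedral_map :: "'a set \<Rightarrow> (nat \<Rightarrow> 'a \<Rightarrow> 'a) \<Rightarrow> bool" where
  "polyhedral_map F r \<longleftrightarrow> flag_map F r \<and> orientable_map F r \<and> three_connected F r \<and>
     face_closures_ok F r"

text \<open>Automorphisms: permutations of the flags commuting with r 0, r 1, r 2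
(identity outside the flag set, so that they form a finite set).\<close>
definition map_aut :: "'a set \<Rightarrow> (nat \<Rightarrow> 'a \<Rightarrow> 'a) \<Rightarrow> ('a \<Rightarrow> 'a) set" where
  "map_aut F r = {\<phi>. bij_betw \<phi> F F \<and> (\<forall>x\<in>F. \<forall>i<3. \<phi> (r i x) = r i (\<phi> x)) \<and>
                      (\<forall>x. x \<notin> F \<longrightarrow> \<phi> x = x)}"

type_synonym pt = "int \<times> int"
text \<open>A chamber of B_{T_H} is (v, w, f): f a face centre, v a vertex of f, and {v,w} the edge of
f containing v; its colour-0 vertex is v, colour-1 vertex the midpoint of v w, colour-2 vertex f.\<close>
type_synonym hch = "pt \<times> pt \<times> pt"

definition face_centre :: "pt \<Rightarrow> bool" where
  "face_centre p \<longleftrightarrow> (fst p - snd p) mod 3 = 0"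

definition lat_adj :: "pt \<Rightarrow> pt \<Rightarrow> bool" where
  "lat_adj p q \<longleftrightarrow> (fst q - fst p, snd q - snd p) \<in> {(1,0), (-1,0), (0,1), (0,-1), (1,-1), (-1,1)}"

definition hex_chamber :: "hch \<Rightarrow> bool" where
  "hex_chamber t = (case t of (v, w, f) \<Rightarrow>
     face_centre f \<and> \<not> face_centre v \<and> \<not> face_centre w \<and> lat_adj v w \<and> lat_adj v f \<and> lat_adj w f)"

definition hex_refl :: "nat \<Rightarrow> hch \<Rightarrow> hch" where
  "hex_refl i t = (case t of (v, w, f) \<Rightarrow>
     if i = 0 then (w, v, f)
     else if i = 1 then (v, (fst f + fst v - fst w, snd f + snd v - snd w), f)
     else (v, w, (fst v + fst w - fst f, snd v + snd w - snd f)))"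

text \<open>Points scaled by 6.  Colour-j vertex of a chamber; its centroid.\<close>
definition chpt6 :: "hch \<Rightarrow> nat \<Rightarrow> pt" where
  "chpt6 t j = (case t of (v, w, f) \<Rightarrow>
     if j = 0 then (6 * fst v, 6 * snd v)
     else if j = 1 then (3 * (fst v + fst w), 3 * (snd v + snd w))
     else (6 * fst f, 6 * snd f))"

definition centroid6 :: "hch \<Rightarrow> pt" where
  "centroid6 t = (case t of (v, w, f) \<Rightarrow>
     (3 * fst v + fst w + 2 * fst f, 3 * snd v + snd w + 2 * snd f))"

definition gc_corner6 :: "nat \<Rightarrow> nat \<Rightarrow> nat \<Rightarrow> pt" where
  "gc_corner6 l m k =
     (if k = 0 then (6 * int l, 6 * int m)
      else if k = 1 then (3 * (int l - int m), 3 * (int l + 2 * int m))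
      else (0, 0))"

definition cross2 :: "pt \<Rightarrow> pt \<Rightarrow> int" where
  "cross2 a b = fst a * snd b - snd a * fst b"

text \<open>Signed position of p relative to the side of the triangle opposite corner k.\<close>
definition gc_side :: "nat \<Rightarrow> nat \<Rightarrow> nat \<Rightarrow> pt \<Rightarrow> int" where
  "gc_side l m k p =
     (let a = (if k = 0 then 1 else if k = 1 then 2 else 0);
          b = (if k = 0 then 2 else if k = 1 then 0 else 1);
          A = gc_corner6 l m a; B = gc_corner6 l m b
      in cross2 (fst B - fst A, snd B - snd A) (fst p - fst A, snd p - snd A))"

text \<open>Chambers of B_{T_H} inside the triangle GC(l,m) (the triangle is a union of chambers,
so a chamber lies in it iff its centroid lies in the interior).\<close>
definition gc_chamber :: "nat \<Rightarrow> nat \<Rightarrow> hch \<Rightarrow> bool" where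
  "gc_chamber l m t \<longleftrightarrow> hex_chamber t \<and>
     (\<forall>k<3. gc_side l m k (centroid6 t) * gc_side l m k (gc_corner6 l m k) > 0)"

definition wall_on_side :: "nat \<Rightarrow> nat \<Rightarrow> nat \<Rightarrow> hch \<Rightarrow> nat \<Rightarrow> bool" where
  "wall_on_side l m i t k \<longleftrightarrow> (\<forall>j<3. j \<noteq> i \<longrightarrow> gc_side l m k (chpt6 t j) = 0)"

text \<open>Flags of GC(l,m)(P): a chamber c of B_P together with a chamber t of the copy of the
triangle glued into c.  Crossing the side of the triangle opposite corner k leads to the same
position in the (mirror) copy glued into the neighbouring chamber r k c.\<close>
definition gc_flags :: "nat \<Rightarrow> nat \<Rightarrow> 'a set \<Rightarrow> ('a \<times> hch) set" where
  "gc_flags l m F = F \<times> {t. gc_chamber l m t}"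

definition gc_r :: "nat \<Rightarrow> nat \<Rightarrow> (nat \<Rightarrow> 'a \<Rightarrow> 'a) \<Rightarrow> nat \<Rightarrow> 'a \<times> hch \<Rightarrow> 'a \<times> hch" where
  "gc_r l m r i x = (case x of (c, t) \<Rightarrow>
     if gc_chamber l m (hex_refl i t) then (c, hex_refl i t)
     else (let k = (if wall_on_side l m i t 0 then 0
                    else if wall_on_side l m i t 1 then 1 else 2)
           in (r k c, t)))"

end

(*
  A hexagonal map P on the torus is a quotient of the hexagonal tiling T_H. Euler's formula and
  3-connectivity force every vertex to have degree 3, so the flags of P satisfy the relations of
  the Coxeter group [6,3] and the chambers of T_H can be developed onto the flags of P along words
  in the reflections. Two chambers with the same image differ by a deck transformation; since P is
  orientable and a rotation of T_H fixes a cell, whose flags would then be fixed by a rotation of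
  P, every deck transformation is a translation. Gluing the triangle GC(l,m) into every chamber
  of T_H retiles the plane, and GC(l,m)(P) is the quotient of this retiling, so each translation
  of T_H by a face centre induces an automorphism of GC(l,m)(P). Automorphisms of P lift
  injectively and keep the position inside the triangle, whereas the translation by (1,1) moves it
  unless (l,m) = (1,0).
*)

theory Submission
  imports Defs "HOL-Combinatorics.Permutations" "HOL-Combinatorics.Orbits" "HOL-Library.Product_Plus"
begin

section \<open>Flag systems and their orbits\<close>

lemma self_in_orbit_if_inj_on:
  assumes "finite A" "f ` A \<subseteq> A" "inj_on f A" "x \<in> A"
  shows "x \<in> orbit f x"
proof -
  let ?p = "perm_restrict f A"
  have "inj ?p"
    using assms(2,3) by (auto simp: inj_def inj_on_def perm_restrict_def split: if_splits)
  have fA: "(f ^^ n) y \<in> A" if "y \<in> A" for n y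
    using that assms(2) by (induction n) auto
  have pow: "(?p ^^ n) y = (f ^^ n) y" if "y \<in> A" for n y
    using that fA by (induction n) (auto simp: perm_restrict_def)
  have "(?p ^^ n) x \<in> A" for n
    using assms(4) fA pow by simp
  then have "finite {y. \<exists>n. y = (?p ^^ n) x}"
    using assms(1) by (auto intro: finite_subset)
  then obtain n where "0 < n" "(?p ^^ n) x = x"
    using funpow_inj_finite[OF \<open>inj ?p\<close>] by blast
  moreover have "(f ^^ n) x = x"
    using pow[OF assms(4)] \<open>(?p ^^ n) x = x\<close> by simp
  ultimately show ?thesis
    unfolding orbit_altdef by (metis (mono_tags, lifting) mem_Collect_eq)
qed

lemma orbit_preimage_if_inj_on:
  assumes "finite A" "f ` A \<subseteq> A" "inj_on f A" "x \<in> A" "w \<in> A" "f w \<in> orbit f x"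
  shows "w \<in> orbit f x"
proof -
  have "(f ^^ n) x \<in> A" for n
    using assms(2,4) by (induction n) auto
  then have OA: "orbit f x \<subseteq> A"
    by (auto simp: orbit_altdef)
  have "finite (orbit f x)"
    using OA assms(1) by (rule finite_subset)
  moreover have "f ` orbit f x \<subseteq> orbit f x"
    by (rule image_subsetI) (rule orbit.step)
  moreover have "inj_on f (orbit f x)"
    using assms(3) OA by (rule inj_on_subset)
  ultimately have "f ` orbit f x = orbit f x"
    by (rule endo_inj_surj)
  then obtain w' where "w' \<in> orbit f x" "f w = f w'"
    using assms(6) by (metis imageE)
  then show ?thesis
    using inj_onD[OF assms(3)] OA assms(5) by blast
qed

locale flag_system =
  fixes F :: "'a set" and r :: "nat \<Rightarrow> 'a \<Rightarrow> 'a"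
  assumes flag_map: "flag_map F r"
begin

lemma finite_flags: "finite F"
  and flags_nonempty: "F \<noteq> {}"
  and r_in: "i < 3 \<Longrightarrow> x \<in> F \<Longrightarrow> r i x \<in> F"
  and r_r: "i < 3 \<Longrightarrow> x \<in> F \<Longrightarrow> r i (r i x) = x"
  and r_neq: "i < 3 \<Longrightarrow> x \<in> F \<Longrightarrow> r i x \<noteq> x"
  and r0_r2: "x \<in> F \<Longrightarrow> r 0 (r 2 x) = r 2 (r 0 x)"
  and r0_r2_neq: "x \<in> F \<Longrightarrow> r 0 (r 2 x) \<noteq> x"
  and flags_connected: "x \<in> F \<Longrightarrow> y \<in> F \<Longrightarrow> (x, y) \<in> (flag_step F r {0,1,2})\<^sup>*"
  using flag_map by (auto simp: flag_map_def)

lemma flag_stepE: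
  assumes "(y, z) \<in> flag_step F r I" "I \<subseteq> {0,1,2}"
  obtains i where "i \<in> I" "i < 3" "y \<in> F" "z = r i y"
  using assms unfolding flag_step_def by fastforce

lemma flag_step_sym:
  assumes "(y, z) \<in> flag_step F r I" "I \<subseteq> {0,1,2}"
  shows "(z, y) \<in> flag_step F r I"
proof -
  obtain i where "i \<in> I" "i < 3" "y \<in> F" "z = r i y"
    using assms by (rule flag_stepE)
  then show ?thesis
    unfolding flag_step_def using r_in r_r by force
qed

lemma orbit_of_self: "x \<in> orbit_of F r I x"
  unfolding orbit_of_def by simp

lemma orbit_of_induct [consumes 2, case_names base step]:
  assumes "y \<in> orbit_of F r I x" "I \<subseteq> {0,1,2}"
    and "P x" "\<And>y i. P y \<Longrightarrow> y \<in> F \<Longrightarrow> i \<in> I \<Longrightarrow> P (r i y)"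
  shows "P y"
proof -
  have "(x, y) \<in> (flag_step F r I)\<^sup>*"
    using assms(1) unfolding orbit_of_def by simp
  then show ?thesis
  proof (induction rule: rtrancl_induct)
    case (step y z)
    from step.hyps(2) assms(2) obtain i where "i \<in> I" "y \<in> F" "z = r i y"
      by (rule flag_stepE)
    then show ?case
      using assms(4) step.IH by blast
  qed (rule assms(3))
qed

lemma orbit_of_subset:
  assumes "I \<subseteq> {0,1,2}" "x \<in> F"
  shows "orbit_of F r I x \<subseteq> F"
proof
  fix y assume "y \<in> orbit_of F r I x"
  then show "y \<in> F"
    using assms(1) by (induction rule: orbit_of_induct) (use assms r_in in auto)
qed

lemma orbit_of_closed:
  assumes "I \<subseteq> {0,1,2}" "x \<in> F" "y \<in> orbit_of F r I x" "i \<in> I"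
  shows "r i y \<in> orbit_of F r I x"
proof -
  have "(y, r i y) \<in> flag_step F r I"
    unfolding flag_step_def using orbit_of_subset[OF assms(1,2)] assms(3,4) by blast
  then show ?thesis
    using assms(3) unfolding orbit_of_def by (auto intro: rtrancl_into_rtrancl)
qed

lemma orbit_of_eq:
  assumes "I \<subseteq> {0,1,2}" "y \<in> orbit_of F r I x"
  shows "orbit_of F r I y = orbit_of F r I x"
proof -
  have xy: "(x, y) \<in> (flag_step F r I)\<^sup>*"
    using assms(2) unfolding orbit_of_def by simp
  then have "(y, x) \<in> (flag_step F r I)\<^sup>*"
    by (induction rule: rtrancl_induct)
      (auto intro: converse_rtrancl_into_rtrancl flag_step_sym[OF _ assms(1)])
  with xy show ?thesis
    unfolding orbit_of_def by (auto intro: rtrancl_trans)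
qed

lemma card_eq_sum_orbits:
  assumes "I \<subseteq> {0,1,2}"
  shows "card F = (\<Sum>X\<in>orbit_of F r I ` F. card X)"
proof -
  have "card (\<Union> (orbit_of F r I ` F)) = (\<Sum>X\<in>orbit_of F r I ` F. card X)"
  proof (rule card_Union_disjoint)
    show "pairwise disjnt (orbit_of F r I ` F)"
    proof (rule pairwiseI)
      fix X Y assume "X \<in> orbit_of F r I ` F" "Y \<in> orbit_of F r I ` F" "X \<noteq> Y"
      then show "disjnt X Y"
        unfolding disjnt_def using orbit_of_eq[OF assms] by blast
    qed
  qed (use orbit_of_subset[OF assms] finite_flags in \<open>auto intro: finite_subset\<close>)
  moreover have "\<Union> (orbit_of F r I ` F) = F"
    using orbit_of_subset[OF assms] orbit_of_self by blast
  ultimately show ?thesis by simp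
qed

lemma card_edge_orbit:
  assumes x: "x \<in> F"
  shows "card (ecl F r x) = 4"
proof -
  have I: "{0, 2} \<subseteq> {0::nat, 1, 2}" by auto
  have F: "r 0 x \<in> F" "r 2 x \<in> F"
    using r_in x by auto
  have rr: "r 0 (r 0 x) = x" "r 2 (r 2 x) = x" "r 2 (r 2 (r 0 x)) = r 0 x"
    and r02: "r 0 (r 2 x) = r 2 (r 0 x)" "r 0 (r 2 (r 0 x)) = r 2 x"
    using r_r[of 0] r_r[of 2] r0_r2 x F by auto
  have "ecl F r x \<subseteq> set [x, r 0 x, r 2 x, r 2 (r 0 x)]"
  proof
    fix y assume "y \<in> ecl F r x"
    then show "y \<in> set [x, r 0 x, r 2 x, r 2 (r 0 x)]"
      unfolding ecl_def using I
      by (induction rule: orbit_of_induct) (use rr r02 in auto)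
  qed
  moreover have "set [x, r 0 x, r 2 x, r 2 (r 0 x)] \<subseteq> ecl F r x"
    unfolding ecl_def using orbit_of_closed[OF I x] orbit_of_self by simp
  ultimately have "ecl F r x = set [x, r 0 x, r 2 x, r 2 (r 0 x)]"
    by (rule subset_antisym)
  moreover have "distinct [x, r 0 x, r 2 x, r 2 (r 0 x)]"
  proof -
    have "r 0 x \<noteq> x" "r 2 x \<noteq> x" "r 2 (r 0 x) \<noteq> r 0 x" "r 2 (r 0 x) \<noteq> x"
      using r_neq[of 0] r_neq[of 2] r0_r2_neq x F r02(1) by auto
    moreover have "r 0 x \<noteq> r 2 x" "r 2 x \<noteq> r 2 (r 0 x)"
      using \<open>r 2 (r 0 x) \<noteq> x\<close> \<open>r 0 x \<noteq> x\<close> rr(2,3) by (metis, metis)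
    ultimately show ?thesis by auto
  qed
  ultimately show ?thesis
    by (simp only: distinct_card) simp
qed

end

locale oriented_flag_system = flag_system +
  fixes s :: "'a \<Rightarrow> bool"
  assumes s_r: "i < 3 \<Longrightarrow> x \<in> F \<Longrightarrow> s (r i x) \<noteq> s x"
begin

lemma card_sign_class:
  assumes "X \<subseteq> F" "k < 3" "\<And>y. y \<in> X \<Longrightarrow> r k y \<in> X"
  shows "card X = 2 * card {y \<in> X. s y = c}"
proof -
  let ?A = "{y \<in> X. s y}" and ?B = "{y \<in> X. \<not> s y}"
  have "bij_betw (r k) ?A ?B"
    by (rule bij_betw_byWitness[where f' = "r k"]) (use assms r_r s_r in blast)+
  then have AB: "card ?A = card ?B"
    by (rule bij_betw_same_card)
  have "finite X"
    using assms(1) finite_flags finite_subset by blast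
  then have "card X = card ?A + card ?B"
    by (subst card_Un_disjoint[symmetric]) (auto intro: arg_cong[where f = card])
  moreover have "{y \<in> X. s y = c} = (if c then ?A else ?B)"
    by auto
  ultimately show ?thesis
    using AB by simp
qed

lemma rotation_orbit_subset_sign_class:
  assumes ij: "i < 3" "j < 3" and x: "x \<in> F"
  shows "orbit (r j \<circ> r i) x \<subseteq> {y \<in> orbit_of F r {i, j} x. s y = s x}"
proof
  fix y assume "y \<in> orbit (r j \<circ> r i) x"
  then obtain n where y: "y = ((r j \<circ> r i) ^^ n) x"
    unfolding orbit_altdef by blast
  have I: "{i, j} \<subseteq> {0,1,2}"
    using ij by auto
  have "((r j \<circ> r i) ^^ n) x \<in> F \<and> ((r j \<circ> r i) ^^ n) x \<in> orbit_of F r {i, j} x \<and>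
      s (((r j \<circ> r i) ^^ n) x) = s x"
  proof (induction n)
    case (Suc n)
    then show ?case
      using s_r ij r_in orbit_of_closed[OF I x] by auto
  qed (simp add: x orbit_of_self)
  then show "y \<in> {y \<in> orbit_of F r {i, j} x. s y = s x}"
    using y by simp
qed

lemma sign_class_eq_rotation_orbit:
  assumes ij: "i < 3" "j < 3" and x: "x \<in> F"
  shows "{y \<in> orbit_of F r {i, j} x. s y = s x} = orbit (r j \<circ> r i) x"
proof
  define \<rho> where "\<rho> = r j \<circ> r i"
  have \<rho>: "\<rho> y = r j (r i y)" for y
    by (simp add: \<rho>_def)
  have I: "{i, j} \<subseteq> {0,1,2}"
    using ij by auto
  have \<rho>F: "\<rho> y \<in> F" if "y \<in> F" for y
    using that ij r_in by (simp add: \<rho>)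
  have "r i (r j (\<rho> y)) = y" if "y \<in> F" for y
    using that ij r_in r_r by (simp add: \<rho>)
  then have inj: "inj_on \<rho> F"
    by (intro inj_onI) metis
  have x_in: "x \<in> orbit \<rho> x"
    by (rule self_in_orbit_if_inj_on[OF finite_flags _ inj x]) (use \<rho>F in auto)
  have preimage: "w \<in> orbit \<rho> x" if "w \<in> F" "\<rho> w \<in> orbit \<rho> x" for w
    by (rule orbit_preimage_if_inj_on[OF finite_flags _ inj x that]) (use \<rho>F in auto)
  have "y \<in> orbit \<rho> x \<and> s y = s x \<or> r j y \<in> orbit \<rho> x \<and> s y \<noteq> s x"
    if "y \<in> orbit_of F r {i, j} x" for y
    using that I
  proof (induction rule: orbit_of_induct)
    case base
    then show ?case using x_in by blast
  next
    case (step y t)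
    have "r i (r i y) = y" "r j (r j y) = y" "s (r t y) \<noteq> s y" "s (r i y) \<noteq> s y"
      using step.hyps ij r_r s_r by auto
    moreover have "r i y \<in> orbit \<rho> x" if "r j y \<in> orbit \<rho> x"
      using preimage[of "r i y"] that step.hyps ij r_in r_r by (simp add: \<rho>)
    moreover have "r j (r i y) \<in> orbit \<rho> x" if "y \<in> orbit \<rho> x"
      using orbit.step[OF that] by (simp add: \<rho>)
    ultimately show ?case
      using step.IH step.hyps(2) by auto
  qed
  then show "{y \<in> orbit_of F r {i, j} x. s y = s x} \<subseteq> orbit (r j \<circ> r i) x"
    unfolding \<rho>_def by blast
qed (rule rotation_orbit_subset_sign_class[OF assms])

lemma dihedral_orbit_period:
  assumes ij: "i < 3" "j < 3" and x: "x \<in> F"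
    and card: "card (orbit_of F r {i, j} x) = 2 * n"
  shows "((r j \<circ> r i) ^^ n) x = x" "0 < k \<Longrightarrow> k < n \<Longrightarrow> ((r j \<circ> r i) ^^ k) x \<noteq> x"
proof -
  define \<rho> where "\<rho> = r j \<circ> r i"
  have I: "{i, j} \<subseteq> {0,1,2}" using ij by auto
  have "card (orbit_of F r {i, j} x) = 2 * card (orbit \<rho> x)"
    unfolding \<rho>_def sign_class_eq_rotation_orbit[OF ij x, symmetric]
    by (rule card_sign_class[OF orbit_of_subset[OF I x] ij(1)]) (simp add: orbit_of_closed[OF I x])
  then have n: "card (orbit \<rho> x) = n"
    using card by simp
  have x_in: "x \<in> orbit \<rho> x"
    using sign_class_eq_rotation_orbit[OF ij x] orbit_of_self unfolding \<rho>_def by blast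
  have "card (orbit \<rho> x) = card {0..<funpow_dist1 \<rho> x x}"
    unfolding orbit_conv_funpow_dist1[OF x_in] by (rule card_image[OF inj_on_funpow_dist1[OF x_in]])
  then have "card (orbit \<rho> x) = funpow_dist1 \<rho> x x"
    by simp
  with x_in show "(\<rho> ^^ n) x = x" "0 < k \<Longrightarrow> k < n \<Longrightarrow> (\<rho> ^^ k) x \<noteq> x"
    using n funpow_dist1_prop funpow_dist1_least by metis+
qed


lemma card_face_orbit:
  assumes "x \<in> F"
  shows "card (fcl F r x) = 2 * face_size (fcl F r x)"
proof -
  have I: "{0, 1} \<subseteq> {0::nat, 1, 2}" by auto
  have "card (fcl F r x) = 2 * card {y \<in> fcl F r x. s y = True}"
  proof (rule card_sign_class)
    show "fcl F r x \<subseteq> F"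
      unfolding fcl_def by (rule orbit_of_subset[OF I assms])
    show "r 0 y \<in> fcl F r x" if "y \<in> fcl F r x" for y
      using orbit_of_closed[OF I assms, of y 0] that unfolding fcl_def by simp
  qed simp
  then show ?thesis
    unfolding face_size_def by simp
qed

lemma vertex_neighbour_from_sign_class:
  assumes x: "x \<in> F" and y: "y \<in> vcl F r x"
  obtains z where "z \<in> vcl F r x" "s z = s x" "vcl F r (r 0 z) = vcl F r (r 0 y)"
proof (cases "s y = s x")
  case False
  have I: "{1, 2} \<subseteq> {0::nat, 1, 2}" by auto
  have yF: "y \<in> F"
    using y orbit_of_subset[OF I x] unfolding vcl_def by blast
  have "r 2 (r 0 y) \<in> vcl F r (r 0 y)"
    unfolding vcl_def using orbit_of_closed[OF I r_in[of 0 y] orbit_of_self] yF by simp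
  then have "vcl F r (r 0 (r 2 y)) = vcl F r (r 0 y)"
    unfolding vcl_def using orbit_of_eq[OF I] r0_r2[OF yF] by metis
  moreover have "r 2 y \<in> vcl F r x" "s (r 2 y) = s x"
    using y False s_r[OF _ yF, of 2] orbit_of_closed[OF I x] unfolding vcl_def by auto
  ultimately show ?thesis
    using that by blast
qed (use that y in blast)

lemma card_vertex_neighbours:
  assumes x: "x \<in> F"
  shows "2 * card ((\<lambda>y. vcl F r (r 0 y)) ` vcl F r x) \<le> card (vcl F r x)"
proof -
  let ?A = "{y \<in> vcl F r x. s y = s x}"
  have I: "{1, 2} \<subseteq> {0::nat, 1, 2}" by auto
  have vF: "vcl F r x \<subseteq> F"
    unfolding vcl_def by (rule orbit_of_subset[OF I x])
  have "(\<lambda>y. vcl F r (r 0 y)) ` vcl F r x \<subseteq> (\<lambda>y. vcl F r (r 0 y)) ` ?A"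
  proof
    fix u assume "u \<in> (\<lambda>y. vcl F r (r 0 y)) ` vcl F r x"
    then obtain y where y: "y \<in> vcl F r x" "u = vcl F r (r 0 y)"
      by blast
    from y(1) obtain z where "z \<in> vcl F r x" "s z = s x" "vcl F r (r 0 z) = vcl F r (r 0 y)"
      by (rule vertex_neighbour_from_sign_class[OF x])
    then show "u \<in> (\<lambda>y. vcl F r (r 0 y)) ` ?A"
      using y(2) by blast
  qed
  moreover have finA: "finite ?A"
    using vF finite_flags by (auto intro: finite_subset)
  ultimately have "card ((\<lambda>y. vcl F r (r 0 y)) ` vcl F r x) \<le> card ((\<lambda>y. vcl F r (r 0 y)) ` ?A)"
    by (intro card_mono finite_imageI)
  also have "\<dots> \<le> card ?A"
    using finA by (rule card_image_le)
  finally have "card ((\<lambda>y. vcl F r (r 0 y)) ` vcl F r x) \<le> card ?A" .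
  moreover have "card (vcl F r x) = 2 * card ?A"
    by (rule card_sign_class[OF vF, of 2]) (use orbit_of_closed[OF I x, of _ 2] in \<open>auto simp: vcl_def\<close>)
  ultimately show ?thesis
    by linarith
qed

text \<open>A vertex of degree at most 2 would be separated from the rest of the graph by its
  neighbours.\<close>

lemma card_vertex_orbit_ge_6:
  assumes tc: "three_connected F r" and x: "x \<in> F"
  shows "6 \<le> card (vcl F r x)"
proof (rule ccontr)
  assume small: "\<not> 6 \<le> card (vcl F r x)"
  let ?v = "vcl F r x" and ?V = "map_vertices F r"
  define N where "N = (\<lambda>y. vcl F r (r 0 y)) ` ?v"
  have I: "{1, 2} \<subseteq> {0::nat, 1, 2}" by auto
  have no_loop: "vcl F r y \<noteq> vcl F r (r 0 y)" if "y \<in> F" for y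
    using tc that by (simp add: three_connected_def simple_underlying_graph_def)
  have separate: "connected_on (?V - S) (graph_adj F r)" if "S \<subseteq> ?V" "card S \<le> 2" for S
    using tc that by (simp add: three_connected_def)
  have V4: "4 \<le> card ?V"
    using tc by (simp add: three_connected_def)
  have vF: "?v \<subseteq> F"
    unfolding vcl_def by (rule orbit_of_subset[OF I x])
  have N2: "card N \<le> 2"
    using card_vertex_neighbours[OF x] small unfolding N_def by linarith
  moreover have "N \<subseteq> ?V"
    unfolding N_def map_vertices_def using vF r_in by auto
  ultimately have conn: "connected_on (?V - N) (graph_adj F r)"
    by (rule separate[rotated])
  have "?v \<notin> N"
  proof
    assume "?v \<in> N"
    then obtain y where y: "y \<in> ?v" "?v = vcl F r (r 0 y)"
      unfolding N_def by blast
    then have "vcl F r y = vcl F r (r 0 y)"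
      using orbit_of_eq[OF I y(1)[unfolded vcl_def]] unfolding vcl_def by simp
    then show False
      using no_loop y(1) vF by blast
  qed
  then have v: "?v \<in> ?V - N"
    using x unfolding map_vertices_def by blast
  have "finite N"
    unfolding N_def using vF finite_flags by (auto intro: finite_subset)
  then have "card (insert ?v N) \<le> 3"
    using N2 by (simp add: card_insert_if)
  then have "\<not> ?V \<subseteq> insert ?v N"
    using card_mono[of "insert ?v N" ?V] \<open>finite N\<close> V4 by auto
  then obtain w where w: "w \<in> ?V - N" "w \<noteq> ?v"
    by blast
  then have "(?v, w) \<in> (graph_adj F r \<inter> (?V - N) \<times> (?V - N))\<^sup>*"
    using conn v unfolding connected_on_def by blast
  then obtain u where u: "(?v, u) \<in> graph_adj F r" "u \<notin> N"
    using w(2) by (cases rule: converse_rtranclE) blast+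
  then obtain y where y: "y \<in> F" "?v = vcl F r y" "u = vcl F r (r 0 y)"
    unfolding graph_adj_def by blast
  then have "y \<in> ?v"
    using orbit_of_self[of y] unfolding vcl_def by simp
  then show False
    using u(2) y(3) unfolding N_def by blast
qed


text \<open>Each edge carries 4 flags and each hexagon 12, while a vertex of degree d carries 2 d flags;
  with Euler characteristic 0 this forces average degree 3, and every degree is at least 3.\<close>

lemma card_vertex_orbit_eq_6:
  assumes tc: "three_connected F r" and euler: "euler_char F r = 0"
    and hex: "\<forall>f\<in>map_faces F r. face_size f = 6" and x: "x \<in> F"
  shows "card (vcl F r x) = 6"
proof (rule ccontr)
  let ?V = "map_vertices F r" and ?E = "map_edges F r" and ?Fc = "map_faces F r"
  have face12: "card (fcl F r x) = 12" if "x \<in> F" for x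
    using card_face_orbit[OF that] hex that unfolding map_faces_def by simp
  have "card F = (\<Sum>e\<in>?E. card e)" "card F = (\<Sum>f\<in>?Fc. card f)" "card F = (\<Sum>v\<in>?V. card v)"
    using card_eq_sum_orbits[of "{0, 2}"] card_eq_sum_orbits[of "{0, 1}"] card_eq_sum_orbits[of "{1, 2}"]
    unfolding map_edges_def map_faces_def map_vertices_def ecl_def[abs_def] fcl_def[abs_def] vcl_def[abs_def]
    by auto
  moreover have "(\<Sum>e\<in>?E. card e) = (\<Sum>e\<in>?E. 4)"
    unfolding map_edges_def by (rule sum.cong) (auto simp: card_edge_orbit)
  moreover have "(\<Sum>f\<in>?Fc. card f) = (\<Sum>f\<in>?Fc. 12)"
    unfolding map_faces_def by (rule sum.cong) (auto simp: face12)
  ultimately have "card F = 4 * card ?E" "card F = 12 * card ?Fc" and sumV: "card F = (\<Sum>v\<in>?V. card v)"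
    by simp_all
  with euler have sum6: "(\<Sum>v\<in>?V. card v) = (\<Sum>v\<in>?V. 6)"
    unfolding euler_char_def by simp
  assume "card (vcl F r x) \<noteq> 6"
  then have "6 < card (vcl F r x)"
    using card_vertex_orbit_ge_6[OF tc x] by simp
  then have "(\<Sum>v\<in>?V. 6) < (\<Sum>v\<in>?V. card v)"
    using card_vertex_orbit_ge_6[OF tc] x finite_flags
    by (intro sum_strict_mono_ex1) (auto simp: map_vertices_def)
  then show False
    using sum6 by simp
qed
end

section \<open>Hexagonal maps on the torus\<close>

locale hexagonal_map = flag_system +
  assumes orientable: "orientable_map F r"
    and face_rotation: "x \<in> F \<Longrightarrow> ((r 1 \<circ> r 0) ^^ 6) x = x"
    and face_rotation_neq: "x \<in> F \<Longrightarrow> 0 < k \<Longrightarrow> k < 6 \<Longrightarrow> ((r 1 \<circ> r 0) ^^ k) x \<noteq> x"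
    and vertex_rotation: "x \<in> F \<Longrightarrow> ((r 2 \<circ> r 1) ^^ 3) x = x"
    and vertex_rotation_neq: "x \<in> F \<Longrightarrow> 0 < k \<Longrightarrow> k < 3 \<Longrightarrow> ((r 2 \<circ> r 1) ^^ k) x \<noteq> x"

lemma hexagonal_map_if_hexagonal_torus:
  fixes F :: "'a set" and r :: "nat \<Rightarrow> 'a \<Rightarrow> 'a"
  assumes P: "polyhedral_map F r" and genus: "map_genus F r 1"
    and hex: "\<forall>f\<in>map_faces F r. face_size f = 6"
  shows "hexagonal_map F r"
proof -
  have fm: "flag_map F r" and tc: "three_connected F r" and ori: "orientable_map F r"
    using P unfolding polyhedral_map_def by auto
  interpret flag_system F r
    by (rule flag_system.intro[OF fm])
  obtain s :: "'a \<Rightarrow> bool" where "\<forall>x\<in>F. \<forall>i<3. s (r i x) \<noteq> s x"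
    using ori unfolding orientable_map_def by blast
  then interpret oriented_flag_system F r s
    by unfold_locales blast
  have "euler_char F r = 0"
    using genus unfolding map_genus_def by simp
  note vertex6 = card_vertex_orbit_eq_6[OF tc this hex]
  have face12: "card (fcl F r x) = 12" if "x \<in> F" for x
    using card_face_orbit[OF that] hex that unfolding map_faces_def by simp
  show ?thesis
  proof (unfold_locales)
    show "orientable_map F r" by (rule ori)
    show "((r 1 \<circ> r 0) ^^ 6) x = x" "0 < k \<Longrightarrow> k < 6 \<Longrightarrow> ((r 1 \<circ> r 0) ^^ k) x \<noteq> x"
      if "x \<in> F" for x k
      using dihedral_orbit_period(1)[of 0 1 x 6] dihedral_orbit_period(2)[of 0 1 x 6 k] face12[OF that] that
      unfolding fcl_def by simp_all
    show "((r 2 \<circ> r 1) ^^ 3) x = x" "0 < k \<Longrightarrow> k < 3 \<Longrightarrow> ((r 2 \<circ> r 1) ^^ k) x \<noteq> x"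
      if "x \<in> F" for x k
      using dihedral_orbit_period(1)[of 1 2 x 3] dihedral_orbit_period(2)[of 1 2 x 3 k] vertex6[OF that] that
      unfolding vcl_def by simp_all
  qed
qed

section \<open>The hexagonal tiling\<close>

primrec word_act :: "(nat \<Rightarrow> 'a \<Rightarrow> 'a) \<Rightarrow> nat list \<Rightarrow> 'a \<Rightarrow> 'a" where
  "word_act r [] x = x"
| "word_act r (i # w) x = word_act r w (r i x)"

lemma word_act_append [simp]: "word_act r (u @ v) x = word_act r v (word_act r u x)"
  by (induction u arbitrary: x) auto

lemma word_act_rev:
  assumes "set w \<subseteq> {..<3}" "\<And>i x. i < 3 \<Longrightarrow> x \<in> A \<Longrightarrow> r i x \<in> A"
    "\<And>i x. i < 3 \<Longrightarrow> x \<in> A \<Longrightarrow> r i (r i x) = x" "x \<in> A"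
  shows "word_act r (rev w) (word_act r w x) = x" "word_act r w x \<in> A"
  using assms(1,4) by (induction w arbitrary: x) (auto simp: assms(2,3))

lemma face_centre_iff_ex: "face_centre f \<longleftrightarrow> (\<exists>k. fst f = snd f + 3 * k)"
  unfolding face_centre_def by presburger

lemma face_centre_add:
  "face_centre f \<Longrightarrow> face_centre g \<Longrightarrow> face_centre (f + g)"
  unfolding face_centre_def by simp presburger

lemma face_centre_diff:
  "face_centre f \<Longrightarrow> face_centre g \<Longrightarrow> face_centre (f - g)"
  unfolding face_centre_def by simp presburger

lemma face_centre_uminus: "face_centre f \<Longrightarrow> face_centre (- f)"
  unfolding face_centre_def by simp presburger

lemma face_centre_add_iff:
  "face_centre f \<Longrightarrow> face_centre (f + p) \<longleftrightarrow> face_centre p"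
  unfolding face_centre_def by simp presburger

text \<open>The chamber (v, w, f) of the barycentric subdivision of T_H is written chamber_at f d with
  shape d = (v - f, w - f), one of the twelve pairs of adjacent neighbours of a face centre.
  A shape is also the matrix, by columns, of the linear symmetry of T_H that maps the base
  chamber onto chamber_at 0 d.\<close>

definition chamber_shapes :: "(pt \<times> pt) list" where
  "chamber_shapes = [((1, 0), (0, 1)), ((1, 0), (1, -1)), ((-1, 0), (0, -1)), ((-1, 0), (-1, 1)),
     ((0, 1), (1, 0)), ((0, 1), (-1, 1)), ((0, -1), (-1, 0)), ((0, -1), (1, -1)),
     ((1, -1), (1, 0)), ((1, -1), (0, -1)), ((-1, 1), (-1, 0)), ((-1, 1), (0, 1))]"

definition chamber_at :: "pt \<Rightarrow> pt \<times> pt \<Rightarrow> hch" where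
  "chamber_at f d = (f + fst d, f + snd d, f)"

definition base_chamber :: hch where
  "base_chamber = chamber_at 0 ((1, 0), (0, 1))"

lemma chamber_shapes_cases:
  assumes "d \<in> set chamber_shapes"
  shows "d = ((1, 0), (0, 1)) \<or> d = ((1, 0), (1, -1)) \<or> d = ((-1, 0), (0, -1)) \<or> d = ((-1, 0), (-1, 1)) \<or>
    d = ((0, 1), (1, 0)) \<or> d = ((0, 1), (-1, 1)) \<or> d = ((0, -1), (-1, 0)) \<or> d = ((0, -1), (1, -1)) \<or>
    d = ((1, -1), (1, 0)) \<or> d = ((1, -1), (0, -1)) \<or> d = ((-1, 1), (-1, 0)) \<or> d = ((-1, 1), (0, 1))"
  using assms unfolding chamber_shapes_def by (simp only: set_simps insert_iff empty_iff simp_thms)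

lemma chamber_shape_iff:
  "d \<in> set chamber_shapes \<longleftrightarrow> \<not> face_centre (fst d) \<and> \<not> face_centre (snd d) \<and>
     lat_adj (fst d) (snd d) \<and> lat_adj (fst d) 0 \<and> lat_adj (snd d) 0"
  (is "?L \<longleftrightarrow> ?R")
proof
  assume ?L
  then show ?R
    by (drule_tac chamber_shapes_cases) (elim disjE; simp add: face_centre_def lat_adj_def)
next
  obtain a1 a2 b1 b2 where d: "d = ((a1, a2), (b1, b2))"
    by (metis prod.collapse)
  assume ?R
  then have "(a1, a2) \<in> {(-1, 0), (1, 0), (0, -1), (0, 1), (-1, 1), (1, -1)}"
    "(b1, b2) \<in> {(-1, 0), (1, 0), (0, -1), (0, 1), (-1, 1), (1, -1)}"
    unfolding d lat_adj_def by auto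
  then show ?L
    using \<open>?R\<close> unfolding d chamber_shapes_def lat_adj_def face_centre_def
    by (elim insertE emptyE; simp)
qed

lemma hex_chamber_at_iff:
  "hex_chamber (chamber_at f d) \<longleftrightarrow> face_centre f \<and> d \<in> set chamber_shapes"
proof -
  have adj: "lat_adj (f + p) (f + q) \<longleftrightarrow> lat_adj p q" for p q
    by (simp add: lat_adj_def)
  have "lat_adj (f + p) f \<longleftrightarrow> lat_adj p 0" for p
    using adj[of p 0] by simp
  then show ?thesis
    unfolding hex_chamber_def chamber_at_def chamber_shape_iff
    by (auto simp: adj face_centre_add_iff)
qed

lemma hex_chamberE:
  assumes "hex_chamber t"
  obtains f d where "t = chamber_at f d" "face_centre f" "d \<in> set chamber_shapes"
proof -
  obtain v w f where t: "t = (v, w, f)"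
    by (cases t) auto
  then have "t = chamber_at f (v - f, w - f)"
    by (simp add: chamber_at_def)
  then show ?thesis
    using that assms hex_chamber_at_iff by metis
qed

lemma base_chamber_hex: "hex_chamber base_chamber"
  by (simp add: base_chamber_def hex_chamber_at_iff face_centre_def chamber_shapes_def)

definition refl_shape :: "pt \<times> pt \<Rightarrow> nat \<Rightarrow> pt \<times> pt" where
  "refl_shape d i =
     (if i = 0 then (snd d, fst d) else if i = 1 then (fst d, fst d - snd d) else (- snd d, - fst d))"

definition refl_shift :: "pt \<times> pt \<Rightarrow> nat \<Rightarrow> pt" where
  "refl_shift d i = (if i = 2 then fst d + snd d else 0)"

lemma hex_refl_chamber_at:
  "i < 3 \<Longrightarrow> hex_refl i (chamber_at f d) = chamber_at (f + refl_shift d i) (refl_shape d i)"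
  by (auto simp: hex_refl_def chamber_at_def refl_shape_def refl_shift_def less_Suc_eq numeral_eq_Suc
      prod_eq_iff)

lemma refl_shape_in:
  "d \<in> set chamber_shapes \<Longrightarrow> refl_shape d i \<in> set chamber_shapes"
  by (drule chamber_shapes_cases) (elim disjE; simp add: refl_shape_def chamber_shapes_def)

lemma face_centre_refl_shift:
  "d \<in> set chamber_shapes \<Longrightarrow> face_centre (refl_shift d i)"
  by (drule chamber_shapes_cases) (elim disjE; simp add: refl_shift_def face_centre_def)

lemma hex_chamber_refl:
  "hex_chamber t \<Longrightarrow> i < 3 \<Longrightarrow> hex_chamber (hex_refl i t)"
  by (elim hex_chamberE)
    (simp add: hex_refl_chamber_at hex_chamber_at_iff refl_shape_in face_centre_add face_centre_refl_shift)

lemma hex_refl_refl: "i < 3 \<Longrightarrow> hex_refl i (hex_refl i t) = t"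
  by (cases t) (auto simp: hex_refl_def)

lemma word_act_hex_refl_rev:
  "set w \<subseteq> {..<3} \<Longrightarrow> word_act hex_refl (rev w) (word_act hex_refl w t) = t"
  by (induction w arbitrary: t) (auto simp: hex_refl_refl)

definition lattice_map :: "pt \<times> pt \<Rightarrow> pt \<Rightarrow> pt" where
  "lattice_map Q p = (fst (fst Q) * fst p + fst (snd Q) * snd p, snd (fst Q) * fst p + snd (snd Q) * snd p)"

definition affine_map :: "pt \<times> pt \<Rightarrow> pt \<Rightarrow> pt \<Rightarrow> pt" where
  "affine_map Q g p = g + lattice_map Q p"

definition chamber_map :: "(pt \<Rightarrow> pt) \<Rightarrow> hch \<Rightarrow> hch" where
  "chamber_map h t = (case t of (v, w, f) \<Rightarrow> (h v, h w, h f))"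

definition unit_shape :: "pt \<times> pt" where
  "unit_shape = ((1, 0), (0, 1))"

definition transl :: "pt \<Rightarrow> pt \<Rightarrow> pt" where
  "transl a = affine_map unit_shape a"

lemma transl_apply [simp]: "transl a p = a + p"
  by (cases p) (simp add: transl_def affine_map_def lattice_map_def unit_shape_def)

lemma unit_shape_in: "unit_shape \<in> set chamber_shapes"
  by (simp add: unit_shape_def chamber_shapes_def)

lemma hex_refl_chamber_map:
  "i < 3 \<Longrightarrow> hex_refl i (chamber_map (affine_map Q g) t) = chamber_map (affine_map Q g) (hex_refl i t)"
  by (cases t rule: prod_cases3, cases g) (auto simp: hex_refl_def chamber_map_def affine_map_def lattice_map_def algebra_simps)

lemma word_act_chamber_map:
  "set w \<subseteq> {..<3} \<Longrightarrow>
    word_act hex_refl w (chamber_map (affine_map Q g) t) = chamber_map (affine_map Q g) (word_act hex_refl w t)"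
  by (induction w arbitrary: t) (auto simp: hex_refl_chamber_map)

lemma chamber_map_chamber_at:
  "chamber_map (affine_map Q g) (chamber_at f d) =
    chamber_at (affine_map Q g f) (lattice_map Q (fst d), lattice_map Q (snd d))"
  by (simp add: chamber_map_def chamber_at_def affine_map_def lattice_map_def algebra_simps)

lemma chamber_map_comp: "chamber_map h (chamber_map g t) = chamber_map (h \<circ> g) t"
  by (cases t rule: prod_cases3) (simp add: chamber_map_def)

lemma chamber_map_transl_transl:
  "chamber_map (transl a) (chamber_map (transl b) t) = chamber_map (transl (a + b)) t"
  by (cases t rule: prod_cases3) (simp add: chamber_map_def algebra_simps)

lemma chamber_map_transl_0 [simp]: "chamber_map (transl 0) t = t"
  by (cases t rule: prod_cases3) (simp add: chamber_map_def)

lemma chamber_map_transl_commute: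
  "chamber_map (transl a) (chamber_map (transl b) s) = chamber_map (transl b) (chamber_map (transl a) s)"
  by (simp add: chamber_map_transl_transl add.commute)

lemma chamber_map_transl_uminus: "chamber_map (transl (- b)) (chamber_map (transl b) s) = s"
  by (simp add: chamber_map_transl_transl)

lemma hex_refl_chamber_map_transl:
  "i < 3 \<Longrightarrow> hex_refl i (chamber_map (transl a) t) = chamber_map (transl a) (hex_refl i t)"
  unfolding transl_def by (rule hex_refl_chamber_map)

lemma chamber_at_transl: "chamber_at f d = chamber_map (transl f) (chamber_at 0 d)"
  by (simp add: chamber_at_def chamber_map_def)

lemma face_centre_lattice_map:
  assumes "Q \<in> set chamber_shapes" "face_centre f"
  shows "face_centre (lattice_map Q f)"
proof -
  obtain a b c d where Q: "Q = ((a, b), (c, d))"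
    by (metis prod.collapse)
  obtain f2 k where f: "f = (f2 + 3 * k, f2)"
    using assms(2) face_centre_iff_ex by (metis prod.collapse)
  have "face_centre (fst Q + snd Q)"
    using chamber_shapes_cases[OF assms(1)] by (elim disjE; simp add: face_centre_def)
  then obtain j where "a + c = b + d + 3 * j"
    unfolding Q face_centre_iff_ex by auto
  then have c: "c = b + d + 3 * j - a"
    by simp
  have "fst (lattice_map Q f) = snd (lattice_map Q f) + 3 * (f2 * j + k * (a - b))"
    unfolding Q f c lattice_map_def by (simp add: algebra_simps)
  then show ?thesis
    unfolding face_centre_iff_ex by blast
qed

lemma face_centre_affine_map:
  "Q \<in> set chamber_shapes \<Longrightarrow> face_centre g \<Longrightarrow> face_centre f \<Longrightarrow> face_centre (affine_map Q g f)"
  unfolding affine_map_def by (intro face_centre_add face_centre_lattice_map)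

lemma lattice_map_shape_in:
  "Q \<in> set chamber_shapes \<Longrightarrow> d \<in> set chamber_shapes \<Longrightarrow>
    (lattice_map Q (fst d), lattice_map Q (snd d)) \<in> set chamber_shapes"
  by (drule chamber_shapes_cases)+ (elim disjE; simp add: lattice_map_def chamber_shapes_def)

lemma hex_chamber_map:
  assumes "Q \<in> set chamber_shapes" "face_centre g" "hex_chamber t"
  shows "hex_chamber (chamber_map (affine_map Q g) t)"
  using assms(3)
  by (elim hex_chamberE)
    (simp add: chamber_map_chamber_at hex_chamber_at_iff face_centre_affine_map[OF assms(1,2)]
      lattice_map_shape_in[OF assms(1)])

lemma hex_chamber_transl:
  "face_centre a \<Longrightarrow> hex_chamber t \<Longrightarrow> hex_chamber (chamber_map (transl a) t)"
  unfolding transl_def by (rule hex_chamber_map[OF unit_shape_in])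

text \<open>Lattice coordinates of face centres with respect to the translations
  by (1, 1) and (2, -1).\<close>

definition lattice_coords :: "pt \<Rightarrow> int \<times> int" where
  "lattice_coords f = ((fst f + 2 * snd f) div 3, (fst f - snd f) div 3)"

lemma lattice_coords_face_centre:
  assumes "fst f = snd f + 3 * k"
  shows "lattice_coords f = (snd f + k, k)"
proof -
  have "fst f + 2 * snd f = 3 * (snd f + k)" "fst f - snd f = 3 * k"
    using assms by simp_all
  then show ?thesis
    unfolding lattice_coords_def by simp
qed

lemma lattice_coords_inverse:
  assumes "face_centre f"
  shows "f = (fst (lattice_coords f) + 2 * snd (lattice_coords f), fst (lattice_coords f) - snd (lattice_coords f))"
proof -
  obtain k where "fst f = snd f + 3 * k"
    using assms face_centre_iff_ex by blast
  then show ?thesis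
    using lattice_coords_face_centre by (simp add: prod_eq_iff)
qed

lemma lattice_coords_add:
  assumes "face_centre g"
  shows "lattice_coords (f + g) = lattice_coords f + lattice_coords g"
proof -
  obtain k where k: "fst g = snd g + 3 * k"
    using assms face_centre_iff_ex by blast
  have "fst (f + g) + 2 * snd (f + g) = (fst f + 2 * snd f) + (snd g + k) * 3"
    "fst (f + g) - snd (f + g) = (fst f - snd f) + k * 3"
    using k by simp_all
  then have "lattice_coords (f + g) = (snd g + k + (fst f + 2 * snd f) div 3, k + (fst f - snd f) div 3)"
    unfolding lattice_coords_def by (simp only: div_mult_self1 zero_neq_numeral not_False_eq_True)
  then show ?thesis
    using lattice_coords_face_centre[OF k] unfolding lattice_coords_def by simp
qed

definition transl_word1 :: "nat list" where
  "transl_word1 = [2, 1, 0, 1, 0, 1]"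

definition transl_word2 :: "nat list" where
  "transl_word2 = [1, 2, 1, 0, 1, 0]"

lemma transl_words_letters:
  "set transl_word1 \<subseteq> {..<3}" "set transl_word2 \<subseteq> {..<3}"
  by (auto simp: transl_word1_def transl_word2_def)

lemma word_act_transl_word1:
  "word_act hex_refl transl_word1 base_chamber = chamber_map (transl (1, 1)) base_chamber"
  and word_act_transl_word2: "word_act hex_refl transl_word2 base_chamber = chamber_map (transl (2, -1)) base_chamber"
  by (simp_all add: transl_word1_def transl_word2_def base_chamber_def chamber_at_def hex_refl_def chamber_map_def)

definition shape_word :: "pt \<times> pt \<Rightarrow> nat list" where
  "shape_word d = the (map_of
     [(((1, 0), (0, 1)), []), (((1, 0), (1, -1)), [1]), (((-1, 0), (0, -1)), [0, 1, 0, 1, 0, 1]),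
      (((-1, 0), (-1, 1)), [0, 1, 0, 1, 0]), (((0, 1), (1, 0)), [0]), (((0, 1), (-1, 1)), [0, 1]),
      (((0, -1), (-1, 0)), [1, 0, 1, 0, 1]), (((0, -1), (1, -1)), [1, 0, 1, 0]), (((1, -1), (1, 0)), [1, 0]),
      (((1, -1), (0, -1)), [1, 0, 1]), (((-1, 1), (-1, 0)), [0, 1, 0, 1]), (((-1, 1), (0, 1)), [0, 1, 0])] d)"

lemma shape_word_letters:
  "d \<in> set chamber_shapes \<Longrightarrow> set (shape_word d) \<subseteq> {..<3}"
  by (drule chamber_shapes_cases) (elim disjE; simp add: shape_word_def)

lemma word_act_shape_word:
  "d \<in> set chamber_shapes \<Longrightarrow> word_act hex_refl (shape_word d) base_chamber = chamber_at 0 d"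
  by (drule chamber_shapes_cases) (elim disjE; simp add: shape_word_def base_chamber_def chamber_at_def hex_refl_def)

definition reachable_transl :: "pt \<Rightarrow> bool" where
  "reachable_transl a \<longleftrightarrow>
     (\<exists>w. set w \<subseteq> {..<3} \<and> word_act hex_refl w base_chamber = chamber_map (transl a) base_chamber)"

lemma reachable_transl_add:
  assumes "reachable_transl a" "reachable_transl b"
  shows "reachable_transl (a + b)"
proof -
  obtain u v where "set u \<subseteq> {..<3}" "word_act hex_refl u base_chamber = chamber_map (transl a) base_chamber"
    "set v \<subseteq> {..<3}" "word_act hex_refl v base_chamber = chamber_map (transl b) base_chamber"
    using assms unfolding reachable_transl_def by blast
  then show ?thesis
    unfolding reachable_transl_def using word_act_chamber_map[of v unit_shape a base_chamber]
    by (intro exI[of _ "u @ v"]) (simp add: chamber_map_transl_transl transl_def[symmetric])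
qed

lemma reachable_transl_uminus:
  assumes "reachable_transl b"
  shows "reachable_transl (- b)"
proof -
  obtain v where v: "set v \<subseteq> {..<3}" "word_act hex_refl v base_chamber = chamber_map (transl b) base_chamber"
    using assms unfolding reachable_transl_def by blast
  then have "word_act hex_refl v (chamber_map (transl (- b)) base_chamber) = base_chamber"
    using word_act_chamber_map[of v unit_shape "- b" base_chamber]
    by (simp add: chamber_map_transl_transl transl_def[symmetric])
  then have "word_act hex_refl (rev v) base_chamber = chamber_map (transl (- b)) base_chamber"
    using word_act_hex_refl_rev[OF v(1)] by metis
  then show ?thesis
    unfolding reachable_transl_def using v(1) by (intro exI[of _ "rev v"]) simp
qed

lemma reachable_transl_face_centre:
  assumes "face_centre g"
  shows "reachable_transl g"
proof -
  have R11: "reachable_transl (1, 1)" and R21: "reachable_transl (2, -1)"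
    unfolding reachable_transl_def using transl_words_letters word_act_transl_word1 word_act_transl_word2
    by blast+
  have diag: "reachable_transl (n, n)" for n :: int
  proof (induction n rule: int_induct[where k = 0])
    case base
    show ?case
      unfolding reachable_transl_def by (intro exI[of _ "[]"]) (simp add: zero_prod_def[symmetric])
  next
    case (step1 n)
    then show ?case using reachable_transl_add[OF _ R11, of "(n, n)"] by simp
  next
    case (step2 n)
    then show ?case using reachable_transl_add[OF _ reachable_transl_uminus[OF R11], of "(n, n)"] by simp
  qed
  have "reachable_transl (n1 + 2 * n2, n1 - n2)" for n1 n2 :: int
  proof (induction n2 rule: int_induct[where k = 0])
    case (step1 n)
    then show ?case
      using reachable_transl_add[OF _ R21, of "(n1 + 2 * n, n1 - n)"] by (simp add: algebra_simps)
  next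
    case (step2 n)
    then show ?case
      using reachable_transl_add[OF _ reachable_transl_uminus[OF R21], of "(n1 + 2 * n, n1 - n)"]
      by (simp add: algebra_simps)
  qed (simp add: diag)
  then show ?thesis
    using lattice_coords_inverse[OF assms] by metis
qed

lemma hex_chamber_word:
  assumes "hex_chamber t"
  obtains w where "set w \<subseteq> {..<3}" "word_act hex_refl w base_chamber = t"
proof -
  obtain f d where t: "t = chamber_at f d" "face_centre f" "d \<in> set chamber_shapes"
    using assms by (rule hex_chamberE)
  obtain u where u: "set u \<subseteq> {..<3}" "word_act hex_refl u base_chamber = chamber_map (transl f) base_chamber"
    using reachable_transl_face_centre[OF t(2)] unfolding reachable_transl_def by blast
  have "word_act hex_refl (u @ shape_word d) base_chamber = t"
    using word_act_chamber_map[OF shape_word_letters[OF t(3)], of unit_shape f base_chamber] u(2)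
    by (simp add: t(1) transl_def[symmetric] word_act_shape_word[OF t(3)] chamber_at_transl[symmetric])
  then show ?thesis
    using that u(1) shape_word_letters[OF t(3)] by (metis Un_subset_iff set_append)
qed

lemma hex_chamber_induct:
  assumes "hex_chamber a" "P a" "\<And>t i. hex_chamber t \<Longrightarrow> i < 3 \<Longrightarrow> P t \<Longrightarrow> P (hex_refl i t)"
    and "hex_chamber b"
  shows "P b"
proof -
  have word: "P (word_act hex_refl w t)" if "hex_chamber t" "P t" "set w \<subseteq> {..<3}" for w t
    using that
  proof (induction w arbitrary: t)
    case (Cons i w)
    then show ?case
      using Cons.IH[of "hex_refl i t"] assms(3) hex_chamber_refl by simp
  qed simp
  obtain u v where u: "set u \<subseteq> {..<3}" "word_act hex_refl u base_chamber = a"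
    and v: "set v \<subseteq> {..<3}" "word_act hex_refl v base_chamber = b"
    using hex_chamber_word assms(1,4) by metis
  have "b = word_act hex_refl (rev u @ v) a"
    using word_act_hex_refl_rev[OF u(1), of base_chamber] u(2) v(2) by simp
  then show ?thesis
    using word[OF assms(1,2), of "rev u @ v"] u(1) v(1) by simp
qed

section \<open>Developing the tiling onto a hexagonal map\<close>

definition zpow :: "('a \<Rightarrow> 'a) \<Rightarrow> ('a \<Rightarrow> 'a) \<Rightarrow> int \<Rightarrow> 'a \<Rightarrow> 'a" where
  "zpow T T' n = (if 0 \<le> n then T ^^ nat n else T' ^^ nat (- n))"

definition inverse_pair_on :: "'a set \<Rightarrow> ('a \<Rightarrow> 'a) \<Rightarrow> ('a \<Rightarrow> 'a) \<Rightarrow> bool" where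
  "inverse_pair_on A T T' \<longleftrightarrow> (\<forall>z\<in>A. T z \<in> A \<and> T' z \<in> A \<and> T (T' z) = z \<and> T' (T z) = z)"

lemma funpow_in_set:
  "(\<And>z. z \<in> A \<Longrightarrow> T z \<in> A) \<Longrightarrow> z \<in> A \<Longrightarrow> (T ^^ n) z \<in> A"
  by (induction n) auto

lemma zpow_in:
  "inverse_pair_on A T T' \<Longrightarrow> z \<in> A \<Longrightarrow> zpow T T' n z \<in> A"
  unfolding zpow_def inverse_pair_on_def using funpow_in_set[of A T] funpow_in_set[of A T'] by auto

lemma zpow_0 [simp]: "zpow T T' 0 z = z"
  and zpow_1: "zpow T T' 1 z = T z"
  and zpow_minus_1: "zpow T T' (-1) z = T' z"
  and zpow_uminus: "zpow T T' (- n) z = zpow T' T n z"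
  by (simp_all add: zpow_def)

lemma inverse_pair_on_sym: "inverse_pair_on A T T' \<Longrightarrow> inverse_pair_on A T' T"
  unfolding inverse_pair_on_def by auto

lemma zpow_succ:
  assumes "inverse_pair_on A T T'" "z \<in> A"
  shows "zpow T T' (n + 1) z = T (zpow T T' n z)"
proof (cases "0 \<le> n")
  case True
  have "nat (n + 1) = Suc (nat n)" using True by simp
  then show ?thesis using True by (simp add: zpow_def)
next
  case False
  define k where "k = nat (- n) - 1"
  have k: "n = - int (Suc k)" using False by (simp add: k_def)
  have z: "(T' ^^ k) z \<in> A" using funpow_in_set[of A T'] assms unfolding inverse_pair_on_def by auto
  show ?thesis
  proof (cases k)
    case 0 then show ?thesis using k assms unfolding zpow_def inverse_pair_on_def by simp
  next
    case (Suc j)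
    have n1: "n + 1 = - int k" using k by simp
    have nk: "nat (int k) = k" by simp
    have nk2: "nat (int k + 1) = Suc k" by simp
    have "zpow T T' (n + 1) z = (T' ^^ k) z" unfolding n1 zpow_def using Suc nk by (simp del: of_nat_Suc)
    moreover have "zpow T T' n z = T' ((T' ^^ k) z)" unfolding k zpow_def using nk2 by simp
    ultimately show ?thesis using assms z unfolding inverse_pair_on_def by simp
  qed
qed

lemma zpow_pred:
  assumes "inverse_pair_on A T T'" "z \<in> A"
  shows "zpow T T' (n - 1) z = T' (zpow T T' n z)"
proof -
  have "zpow T T' (n - 1) z = zpow T' T (- n + 1) z" using zpow_uminus[of T T' "- n + 1"] by simp
  also have "\<dots> = T' (zpow T' T (- n) z)" using zpow_succ[OF inverse_pair_on_sym[OF assms(1)] assms(2), of "- n"]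
    by simp
  also have "\<dots> = T' (zpow T T' n z)" using zpow_uminus[of T' T n] by simp
  finally show ?thesis .
qed

lemma zpow_add:
  assumes "inverse_pair_on A T T'" "z \<in> A"
  shows "zpow T T' (a + b) z = zpow T T' a (zpow T T' b z)"
proof (induction a rule: int_induct[where k=0])
  case base then show ?case by simp
next
  case (step1 i)
  have "zpow T T' (i + 1 + b) z = zpow T T' ((i + b) + 1) z" by (simp add: algebra_simps)
  also have "\<dots> = T (zpow T T' (i + b) z)" by (rule zpow_succ[OF assms])
  also have "\<dots> = T (zpow T T' i (zpow T T' b z))" using step1 by simp
  also have "\<dots> = zpow T T' (i + 1) (zpow T T' b z)"
    using zpow_succ[OF assms(1) zpow_in[OF assms]] by simp
  finally show ?case .
next
  case (step2 i)
  have "zpow T T' (i - 1 + b) z = zpow T T' ((i + b) - 1) z" by (simp add: algebra_simps)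
  also have "\<dots> = T' (zpow T T' (i + b) z)" by (rule zpow_pred[OF assms])
  also have "\<dots> = T' (zpow T T' i (zpow T T' b z))" using step2 by simp
  also have "\<dots> = zpow T T' (i - 1) (zpow T T' b z)"
    using zpow_pred[OF assms(1) zpow_in[OF assms]] by simp
  finally show ?case .
qed

lemma inverse_commute:
  assumes "inverse_pair_on A T T'" "\<And>z. z \<in> A \<Longrightarrow> S z \<in> A"
    "\<And>z. z \<in> A \<Longrightarrow> T (S z) = S (T z)" "z \<in> A"
  shows "T' (S z) = S (T' z)"
proof -
  have "T' (S z) = T' (S (T (T' z)))" using assms(1,4) unfolding inverse_pair_on_def by simp
  also have "\<dots> = T' (T (S (T' z)))" using assms(1,3,4) unfolding inverse_pair_on_def by simp
  also have "\<dots> = S (T' z)" using assms(1,2,4) unfolding inverse_pair_on_def by simp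
  finally show ?thesis .
qed

lemma zpow_commute:
  assumes "inverse_pair_on A T T'" "\<And>z. z \<in> A \<Longrightarrow> S z \<in> A"
    "\<And>z. z \<in> A \<Longrightarrow> T (S z) = S (T z)" "z \<in> A"
  shows "zpow T T' a (S z) = S (zpow T T' a z)"
proof (induction a rule: int_induct[where k=0])
  case base then show ?case by simp
next
  case (step1 i)
  have "zpow T T' (i + 1) (S z) = T (zpow T T' i (S z))" using zpow_succ[OF assms(1) assms(2)[OF assms(4)]] .
  also have "\<dots> = T (S (zpow T T' i z))" using step1 by simp
  also have "\<dots> = S (T (zpow T T' i z))" using assms(3) zpow_in[OF assms(1,4)] by simp
  also have "\<dots> = S (zpow T T' (i + 1) z)" using zpow_succ[OF assms(1,4)] by simp
  finally show ?case .
next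
  case (step2 i)
  have "zpow T T' (i - 1) (S z) = T' (zpow T T' i (S z))" using zpow_pred[OF assms(1) assms(2)[OF assms(4)]] .
  also have "\<dots> = T' (S (zpow T T' i z))" using step2 by simp
  also have "\<dots> = S (T' (zpow T T' i z))"
    using inverse_commute[of A T T' S, OF assms(1-3)] zpow_in[OF assms(1,4)] by simp
  also have "\<dots> = S (zpow T T' (i - 1) z)" using zpow_pred[OF assms(1,4)] by simp
  finally show ?case .
qed

lemma zpow_zpow_commute:
  assumes "inverse_pair_on A T T'" "inverse_pair_on A S S'"
    "\<And>z. z \<in> A \<Longrightarrow> T (S z) = S (T z)" "z \<in> A"
  shows "zpow T T' a (zpow S S' b z) = zpow S S' b (zpow T T' a z)"
proof -
  have sF: "\<And>z. z \<in> A \<Longrightarrow> S z \<in> A" "\<And>z. z \<in> A \<Longrightarrow> S' z \<in> A"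
    using assms(2) unfolding inverse_pair_on_def by auto
  have T_S': "\<And>z. z \<in> A \<Longrightarrow> T (S' z) = S' (T z)"
  proof -
    fix z assume z: "z \<in> A"
    have tF: "\<And>z. z \<in> A \<Longrightarrow> T z \<in> A"
      using assms(1) unfolding inverse_pair_on_def by auto
    have "\<And>z. z \<in> A \<Longrightarrow> S (T z) = T (S z)" using assms(3) by simp
    from inverse_commute[of A S S' T z, OF assms(2) tF this z] show "T (S' z) = S' (T z)" by simp
  qed
  have zpow_S: "\<And>z. z \<in> A \<Longrightarrow> zpow T T' a (S z) = S (zpow T T' a z)"
    by (rule zpow_commute[of A T T' S, OF assms(1) sF(1) assms(3)])
  have zpow_S': "\<And>z. z \<in> A \<Longrightarrow> zpow T T' a (S' z) = S' (zpow T T' a z)"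
    by (rule zpow_commute[of A T T' S', OF assms(1) sF(2) T_S'])
  show ?thesis
  proof (induction b rule: int_induct[where k=0])
    case base then show ?case by simp
  next
    case (step1 i)
    have "zpow T T' a (zpow S S' (i + 1) z) = zpow T T' a (S (zpow S S' i z))"
      using zpow_succ[OF assms(2,4)] by simp
    also have "\<dots> = S (zpow T T' a (zpow S S' i z))" using zpow_S zpow_in[OF assms(2,4)] by simp
    also have "\<dots> = S (zpow S S' i (zpow T T' a z))" using step1 by simp
    also have "\<dots> = zpow S S' (i + 1) (zpow T T' a z)"
      using zpow_succ[OF assms(2) zpow_in[OF assms(1,4)]] by simp
    finally show ?case .
  next
    case (step2 i)
    have "zpow T T' a (zpow S S' (i - 1) z) = zpow T T' a (S' (zpow S S' i z))"
      using zpow_pred[OF assms(2,4)] by simp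
    also have "\<dots> = S' (zpow T T' a (zpow S S' i z))" using zpow_S' zpow_in[OF assms(2,4)] by simp
    also have "\<dots> = S' (zpow S S' i (zpow T T' a z))" using step2 by simp
    also have "\<dots> = zpow S S' (i - 1) (zpow T T' a z)"
      using zpow_pred[OF assms(2) zpow_in[OF assms(1,4)]] by simp
    finally show ?case .
  qed
qed

text \<open>The relations of the Coxeter group [6, 3], one entry per direction of use; a certificate
  for rewrites_to lists rule numbers together with the positions where they are applied.\<close>

definition coxeter_rules :: "(nat list \<times> nat list) list" where
  "coxeter_rules = [([0, 0], []), ([1, 1], []), ([2, 2], []), ([], [0, 0]), ([], [1, 1]), ([], [2, 2]),
     ([0, 1, 0, 1, 0, 1], [1, 0, 1, 0, 1, 0]), ([1, 0, 1, 0, 1, 0], [0, 1, 0, 1, 0, 1]),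
     ([1, 2, 1], [2, 1, 2]), ([2, 1, 2], [1, 2, 1]), ([0, 2], [2, 0]), ([2, 0], [0, 2])]"

fun rewrites_to :: "(nat \<times> nat) list \<Rightarrow> nat list \<Rightarrow> nat list \<Rightarrow> bool" where
  "rewrites_to [] w w' \<longleftrightarrow> w = w'"
| "rewrites_to ((k, p) # ks) w w' \<longleftrightarrow>
     (let (u, v) = coxeter_rules ! k in
      k < length coxeter_rules \<and> take (length u) (drop p w) = u \<and>
      rewrites_to ks (take p w @ v @ drop (p + length u) w) w')"

context hexagonal_map
begin

lemma word_act_in:
  "set w \<subseteq> {..<3} \<Longrightarrow> x \<in> F \<Longrightarrow> word_act r w x \<in> F"
  and word_act_rev_word_act: "set w \<subseteq> {..<3} \<Longrightarrow> x \<in> F \<Longrightarrow> word_act r (rev w) (word_act r w x) = x"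
  using word_act_rev[where A = F] r_in r_r by auto

lemma word_act_swap:
  assumes "set u \<subseteq> {..<3}" "set v \<subseteq> {..<3}" "\<And>x. x \<in> F \<Longrightarrow> word_act r (u @ v) x = x" "x \<in> F"
  shows "word_act r u x = word_act r (rev v) x"
  using word_act_rev_word_act[OF assms(2) word_act_in[OF assms(1,4)]] assms(3)[OF assms(4)] by simp

lemma word_act_rotation_pow:
  "((r 1 \<circ> r 0) ^^ k) x = word_act r (concat (replicate k [0, 1])) x"
  "((r 2 \<circ> r 1) ^^ k) x = word_act r (concat (replicate k [1, 2])) x"
  by (induction k arbitrary: x) (simp_all add: funpow_Suc_right del: funpow.simps)

lemma coxeter_rule_sound:
  assumes "k < length coxeter_rules" "x \<in> F"
  shows "word_act r (fst (coxeter_rules ! k)) x = word_act r (snd (coxeter_rules ! k)) x"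
proof -
  have face: "word_act r [0, 1, 0, 1, 0, 1] x = word_act r [1, 0, 1, 0, 1, 0] x" if "x \<in> F" for x
    using word_act_swap[of "[0, 1, 0, 1, 0, 1]" "[0, 1, 0, 1, 0, 1]", OF _ _ _ that]
      face_rotation word_act_rotation_pow(1)[of 6]
    by (simp add: numeral_eq_Suc)
  have vertex: "word_act r [1, 2, 1] x = word_act r [2, 1, 2] x" if "x \<in> F" for x
    using word_act_swap[of "[1, 2, 1]" "[2, 1, 2]", OF _ _ _ that]
      vertex_rotation word_act_rotation_pow(2)[of 3]
    by (simp add: numeral_eq_Suc)
  have "k \<in> {0..<12}"
    using assms(1) by (simp add: coxeter_rules_def)
  then show ?thesis
    using assms(2) face vertex r_r r_in r0_r2
    by (simp add: coxeter_rules_def atLeastLessThan_nat_numeral) (elim disjE; simp)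
qed

lemma rewrites_to_sound:
  "rewrites_to ks w w' \<Longrightarrow> set w \<subseteq> {..<3} \<Longrightarrow> x \<in> F \<Longrightarrow> word_act r w x = word_act r w' x"
proof (induction ks arbitrary: w)
  case (Cons kp ks)
  obtain k p u v where kp: "kp = (k, p)" and uv: "coxeter_rules ! k = (u, v)"
    by (metis prod.collapse)
  have k: "k < length coxeter_rules" "take (length u) (drop p w) = u"
    and ks: "rewrites_to ks (take p w @ v @ drop (p + length u) w) w'"
    using Cons.prems(1) by (simp_all add: kp uv)
  have w: "w = take p w @ u @ drop (p + length u) w"
    using k(2) by (metis append_take_drop_id drop_drop add.commute)
  have "set u \<subseteq> {..<3}" "set v \<subseteq> {..<3}"
    using k(1) uv unfolding coxeter_rules_def by (auto simp: less_Suc_eq numeral_eq_Suc nth_Cons')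
  moreover have "set (take p w) \<subseteq> {..<3}" "set (drop (p + length u) w) \<subseteq> {..<3}"
    using Cons.prems(2) by (meson order_trans set_take_subset set_drop_subset)+
  ultimately have letters: "set (take p w @ v @ drop (p + length u) w) \<subseteq> {..<3}" "set (take p w) \<subseteq> {..<3}"
    by auto
  have "word_act r w x = word_act r (drop (p + length u) w) (word_act r u (word_act r (take p w) x))"
    by (subst w) simp
  also have "\<dots> = word_act r (drop (p + length u) w) (word_act r v (word_act r (take p w) x))"
    using coxeter_rule_sound[OF k(1) word_act_in[OF letters(2) Cons.prems(3)]] uv by simp
  also have "\<dots> = word_act r w' x"
    using Cons.IH[OF ks letters(1) Cons.prems(3)] by simp
  finally show ?case .
qed simp

end

definition transl_word :: "int \<times> int \<Rightarrow> nat list" where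
  "transl_word n =
     (if snd n = 1 then transl_word2 else if snd n = -1 then rev transl_word2 else []) @
     (if fst n = 1 then transl_word1 else if fst n = -1 then rev transl_word1 else [])"

text \<open>Certificates for the relations shape_word d @ [i] = translation word @ shape_word of the
  reflected shape, one list of three (for i = 0, 1, 2) per shape.\<close>

definition refl_certificate :: "pt \<times> pt \<Rightarrow> nat \<Rightarrow> (nat \<times> nat) list" where
  "refl_certificate d i = the (map_of [
     (((1, 0), (0, 1)), [[], [], [(4, 1), (3, 2), (4, 3), (3, 4), (4, 5)]]),
     (((1, 0), (1, -1)), [[], [(1, 0)], [(4, 2), (3, 3), (4, 4), (3, 5)]]),
     (((-1, 0), (0, -1)), [[(6, 0), (0, 5)], [(1, 5)], [(6, 0), (10, 5)]]),
     (((-1, 0), (-1, 1)), [[(0, 4)], [], [(10, 4), (4, 5)]]),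
     (((0, 1), (1, 0)), [[(0, 0)], [], [(10, 0), (4, 2), (3, 3), (4, 4), (3, 5), (4, 6), (6, 1)]]),
     (((0, 1), (-1, 1)), [[], [(1, 1)], [(4, 3), (3, 4), (4, 5), (3, 3), (11, 2), (4, 4), (5, 5), (9, 3)]]),
     (((0, -1), (-1, 0)), [[(7, 0)], [(1, 4)], []]),
     (((0, -1), (1, -1)), [[(0, 3)], [], [(10, 3), (4, 4), (8, 2), (10, 1), (3, 5), (11, 4), (4, 5), (3, 6), (4, 7), (6, 2)]]),
     (((1, -1), (1, 0)), [[(0, 1)], [], [(10, 1), (4, 2), (3, 3), (4, 4), (3, 5)]]),
     (((1, -1), (0, -1)), [[], [(1, 2)], [(4, 4), (8, 2), (10, 1), (3, 5), (11, 4), (4, 5), (3, 6), (4, 7), (6, 2)]]),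
     (((-1, 1), (-1, 0)), [[], [(1, 3)], [(4, 5)]]),
     (((-1, 1), (0, 1)), [[(0, 2)], [], [(10, 2), (4, 3), (3, 4), (4, 5), (3, 3), (11, 2), (4, 4), (5, 5), (9, 3)]])] d) ! i"

lemma refl_certificates_valid:
  "list_all (\<lambda>d. list_all (\<lambda>i. rewrites_to (refl_certificate d i) (shape_word d @ [i])
      (transl_word (lattice_coords (refl_shift d i)) @ shape_word (refl_shape d i))) [0, 1, 2])
    chamber_shapes"
  by code_simp

lemma lattice_coords_refl_shift:
  "d \<in> set chamber_shapes \<Longrightarrow> lattice_coords (refl_shift d i) \<in> {-1, 0, 1} \<times> {-1, 0, 1}"
  by (drule chamber_shapes_cases) (elim disjE; simp add: refl_shift_def lattice_coords_def)

lemma transl_words_commute: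
  "rewrites_to [(8, 0), (10, 5), (11, 2), (9, 3), (7, 5), (1, 10), (11, 4), (4, 5)]
     (transl_word2 @ transl_word1) (transl_word1 @ transl_word2)"
  by code_simp

context hexagonal_map
begin

definition base_flag :: 'a where
  "base_flag = (SOME x. x \<in> F)"

definition transl1 :: "'a \<Rightarrow> 'a" where "transl1 = word_act r transl_word1"
definition transl1_inv :: "'a \<Rightarrow> 'a" where "transl1_inv = word_act r (rev transl_word1)"
definition transl2 :: "'a \<Rightarrow> 'a" where "transl2 = word_act r transl_word2"
definition transl2_inv :: "'a \<Rightarrow> 'a" where "transl2_inv = word_act r (rev transl_word2)"

definition lattice_flag :: "int \<times> int \<Rightarrow> 'a" where
  "lattice_flag n = zpow transl1 transl1_inv (fst n) (zpow transl2 transl2_inv (snd n) base_flag)"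

definition develop :: "hch \<Rightarrow> 'a" where
  "develop t = (case t of (v, w, f) \<Rightarrow> word_act r (shape_word (v - f, w - f)) (lattice_flag (lattice_coords f)))"

lemma base_flag_in: "base_flag \<in> F"
  unfolding base_flag_def using flags_nonempty by (simp add: some_in_eq)

lemma inverse_pair_transl1: "inverse_pair_on F transl1 transl1_inv"
  and inverse_pair_transl2: "inverse_pair_on F transl2 transl2_inv"
proof -
  have "inverse_pair_on F (word_act r w) (word_act r (rev w))" if "set w \<subseteq> {..<3}" for w
    unfolding inverse_pair_on_def
    using word_act_in[OF that] word_act_in[of "rev w"] word_act_rev_word_act[OF that]
      word_act_rev_word_act[of "rev w"] that
    by simp
  then show "inverse_pair_on F transl1 transl1_inv" "inverse_pair_on F transl2 transl2_inv"
    unfolding transl1_def transl1_inv_def transl2_def transl2_inv_def using transl_words_letters by simp_all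
qed

lemma transl1_transl2: "z \<in> F \<Longrightarrow> transl1 (transl2 z) = transl2 (transl1 z)"
  using rewrites_to_sound[OF transl_words_commute] transl_words_letters
  by (simp add: transl1_def transl2_def)

lemma lattice_flag_in: "lattice_flag n \<in> F"
  unfolding lattice_flag_def
  by (intro zpow_in[OF inverse_pair_transl1] zpow_in[OF inverse_pair_transl2] base_flag_in)

lemma lattice_flag_add:
  "lattice_flag (n + c) = zpow transl1 transl1_inv (fst c) (zpow transl2 transl2_inv (snd c) (lattice_flag n))"
proof -
  let ?T1 = "zpow transl1 transl1_inv" and ?T2 = "zpow transl2 transl2_inv"
  have in2: "?T2 b base_flag \<in> F" for b
    using zpow_in[OF inverse_pair_transl2 base_flag_in] .
  have "lattice_flag (n + c) = ?T1 (fst c) (?T1 (fst n) (?T2 (snd c) (?T2 (snd n) base_flag)))"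
    unfolding lattice_flag_def
    using zpow_add[OF inverse_pair_transl1 zpow_in[OF inverse_pair_transl2 in2]]
      zpow_add[OF inverse_pair_transl2 base_flag_in]
    by (simp add: add.commute)
  also have "\<dots> = ?T1 (fst c) (?T2 (snd c) (?T1 (fst n) (?T2 (snd n) base_flag)))"
    using zpow_zpow_commute[OF inverse_pair_transl1 inverse_pair_transl2 transl1_transl2 in2] by simp
  finally show ?thesis
    unfolding lattice_flag_def .
qed

lemma develop_chamber_at:
  "develop (chamber_at f d) = word_act r (shape_word d) (lattice_flag (lattice_coords f))"
  by (simp add: develop_def chamber_at_def)

lemma word_act_transl_word:
  assumes "n \<in> {-1, 0, 1} \<times> {-1, 0, 1}" "z \<in> F"
  shows "word_act r (transl_word n) z = zpow transl1 transl1_inv (fst n) (zpow transl2 transl2_inv (snd n) z)"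
  using assms
    by (auto simp: transl_word_def zpow_1 zpow_minus_1 transl1_def transl1_inv_def transl2_def transl2_inv_def)

lemma develop_refl:
  assumes "hex_chamber t" "i < 3"
  shows "develop (hex_refl i t) = r i (develop t)"
proof -
  obtain f d where t: "t = chamber_at f d" "face_centre f" "d \<in> set chamber_shapes"
    using assms(1) by (rule hex_chamberE)
  let ?c = "lattice_coords (refl_shift d i)"
  have "i \<in> set [0, 1, 2]"
    using assms(2) by auto
  then have "rewrites_to (refl_certificate d i) (shape_word d @ [i]) (transl_word ?c @ shape_word (refl_shape d i))"
    using refl_certificates_valid t(3) unfolding list_all_iff by blast
  then have "word_act r (shape_word d @ [i]) z = word_act r (transl_word ?c @ shape_word (refl_shape d i)) z"
    if "z \<in> F" for z
    by (rule rewrites_to_sound) (use shape_word_letters[OF t(3)] assms(2) that in auto)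
  then have "r i (word_act r (shape_word d) (lattice_flag (lattice_coords f))) =
      word_act r (shape_word (refl_shape d i)) (word_act r (transl_word ?c) (lattice_flag (lattice_coords f)))"
    using lattice_flag_in by simp
  also have "word_act r (transl_word ?c) (lattice_flag (lattice_coords f)) = lattice_flag (lattice_coords (f + refl_shift d i))"
    using word_act_transl_word[OF lattice_coords_refl_shift[OF t(3)] lattice_flag_in]
    by (simp add: lattice_coords_add[OF face_centre_refl_shift[OF t(3)]] lattice_flag_add)
  finally show ?thesis
    unfolding t(1) hex_refl_chamber_at[OF assms(2)] develop_chamber_at by simp
qed

lemma develop_in: "hex_chamber t \<Longrightarrow> develop t \<in> F"
  by (elim hex_chamberE) (simp add: develop_chamber_at word_act_in shape_word_letters lattice_flag_in)

lemma develop_word_act: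
  "hex_chamber t \<Longrightarrow> set w \<subseteq> {..<3} \<Longrightarrow> develop (word_act hex_refl w t) = word_act r w (develop t)"
  by (induction w arbitrary: t) (simp_all add: develop_refl hex_chamber_refl)

lemma develop_surj:
  assumes "y \<in> F"
  obtains u where "hex_chamber u" "develop u = y"
proof -
  have "(develop base_chamber, y) \<in> (flag_step F r {0,1,2})\<^sup>*"
    by (rule flags_connected[OF develop_in[OF base_chamber_hex] assms])
  then have "\<exists>u. hex_chamber u \<and> develop u = y"
  proof (induction rule: rtrancl_induct)
    case (step y z)
    then obtain u where u: "hex_chamber u" "develop u = y"
      by blast
    from step(2) obtain i where "i < 3" "z = r i y"
      by (rule flag_stepE) auto
    then show ?case
      using u develop_refl hex_chamber_refl by metis
  qed (use base_chamber_hex in blast)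
  then show ?thesis
    using that by blast
qed

end

definition shape_det :: "pt \<times> pt \<Rightarrow> int" where
  "shape_det d = fst (fst d) * snd (snd d) - snd (fst d) * fst (snd d)"

definition chamber_orientation :: "hch \<Rightarrow> int" where
  "chamber_orientation t = (case t of (v, w, f) \<Rightarrow> shape_det (v - f, w - f))"

text \<open>The lattice map sending the shape d to the shape d' (d has determinant \<plusminus>1).\<close>

definition shape_transfer :: "pt \<times> pt \<Rightarrow> pt \<times> pt \<Rightarrow> pt \<times> pt" where
  "shape_transfer d' d =
     (let \<delta> = shape_det d; a = fst (fst d); b = snd (fst d); c = fst (snd d); e = snd (snd d);
          a1 = fst (fst d'); b1 = snd (fst d'); a2 = fst (snd d'); b2 = snd (snd d')
      in ((\<delta> * (e * a1 - b * a2), \<delta> * (e * b1 - b * b2)), (\<delta> * (a * a2 - c * a1), \<delta> * (a * b2 - c * b1))))"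

definition rotation_shapes :: "(pt \<times> pt) list" where
  "rotation_shapes = [((0, 1), (-1, 1)), ((-1, 1), (-1, 0)), ((-1, 0), (0, -1)), ((0, -1), (1, -1)), ((1, -1), (1, 0))]"

definition rotation_words :: "nat list list" where
  "rotation_words = [[0, 1], [0, 1, 0, 1], [0, 1, 0, 1, 0, 1], [0, 1, 0, 1, 0, 1, 0, 1], [0, 1, 0, 1, 0, 1, 0, 1, 0, 1],
     [1, 2], [1, 2, 1, 2], [2, 0]]"

text \<open>For each rotation Q and each class of translation parts g0 modulo the image of the
  face-centre lattice under the identity minus Q: a chamber t and a rotation word c with
  affine_map Q g0 t = word_act hex_refl c t, i.e. a cell fixed by the rotation.\<close>

definition rotation_fixed_chambers :: "((pt \<times> pt) \<times> pt \<times> hch \<times> nat list) list" where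
  "rotation_fixed_chambers = [
     (((0, 1), (-1, 1)), (0, 0), base_chamber, [0, 1]),
     (((-1, 1), (-1, 0)), (0, 0), base_chamber, [0, 1, 0, 1]),
     (((-1, 1), (-1, 0)), (1, 1), chamber_at 0 ((0, 1), (1, 0)), [1, 2, 1, 2]),
     (((-1, 1), (-1, 0)), (2, 2), chamber_at (1, 1) ((-1, 1), (-1, 0)), [1, 2]),
     (((-1, 0), (0, -1)), (0, 0), base_chamber, [0, 1, 0, 1, 0, 1]),
     (((-1, 0), (0, -1)), (3, 0), chamber_at (1, 1) ((0, -1), (1, -1)), [2, 0]),
     (((-1, 0), (0, -1)), (1, 1), base_chamber, [2, 0]),
     (((-1, 0), (0, -1)), (4, 1), chamber_at (1, 1) ((1, 0), (1, -1)), [2, 0]),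
     (((0, -1), (1, -1)), (0, 0), base_chamber, [0, 1, 0, 1, 0, 1, 0, 1]),
     (((0, -1), (1, -1)), (1, 1), base_chamber, [1, 2, 1, 2]),
     (((0, -1), (1, -1)), (2, 2), chamber_at (1, 1) ((1, -1), (1, 0)), [1, 2, 1, 2]),
     (((1, -1), (1, 0)), (0, 0), base_chamber, [0, 1, 0, 1, 0, 1, 0, 1, 0, 1])]"

lemma rotation_fixed_chambers_valid:
  "list_all (\<lambda>(Q, g, t, c). hex_chamber t \<and> c \<in> set rotation_words \<and>
      chamber_map (affine_map Q g) t = word_act hex_refl c t) rotation_fixed_chambers"
  by code_simp

lemma rotation_conjugate_order_6:
  assumes "Q = ((0, 1), (-1, 1)) \<or> Q = ((1, -1), (1, 0))"
  obtains m g0 t c where "face_centre m" "(Q, g0, t, c) \<in> set rotation_fixed_chambers"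
    "(b + 3 * k, b) = g0 + (m - lattice_map Q m)"
  using assms
proof
  assume Q: "Q = ((0, 1), (-1, 1))"
  show ?thesis
    by (rule that[of "(- b, 2 * b + 3 * k)" "(0, 0)" base_chamber "[0, 1]"])
      (simp add: Q rotation_fixed_chambers_def face_centre_def lattice_map_def | presburger)+
next
  assume Q: "Q = ((1, -1), (1, 0))"
  show ?thesis
    by (rule that[of "(2 * b + 3 * k, - b - 3 * k)" "(0, 0)" base_chamber "[0, 1, 0, 1, 0, 1, 0, 1, 0, 1]"])
      (simp add: Q rotation_fixed_chambers_def face_centre_def lattice_map_def | presburger)+
qed

lemma rotation_conjugate_order_3:
  assumes "Q = ((-1, 1), (-1, 0)) \<or> Q = ((0, -1), (1, -1))"
  obtains m g0 t c where "face_centre m" "(Q, g0, t, c) \<in> set rotation_fixed_chambers"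
    "(b + 3 * k, b) = g0 + (m - lattice_map Q m)"
proof -
  note witness = that[unfolded rotation_fixed_chambers_def face_centre_def lattice_map_def]
  have "b mod 3 = 0 \<or> b mod 3 = 1 \<or> b mod 3 = 2"
    by presburger
  with assms show ?thesis
  proof (elim disjE)
    assume Q: "Q = ((-1, 1), (-1, 0))" and b: "b mod 3 = 0"
    show ?thesis
      by (rule witness[of "(k, b + k)" "(0, 0)" base_chamber "[0, 1, 0, 1]"]) (simp add: Q b | use b in presburger)+
  next
    assume Q: "Q = ((-1, 1), (-1, 0))" and b: "b mod 3 = 1"
    show ?thesis
      by (rule witness[of "(k, b - 1 + k)" "(1, 1)" "chamber_at 0 ((0, 1), (1, 0))" "[1, 2, 1, 2]"])
        (simp add: Q b | use b in presburger)+
  next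
    assume Q: "Q = ((-1, 1), (-1, 0))" and b: "b mod 3 = 2"
    show ?thesis
      by (rule witness[of "(k, b - 2 + k)" "(2, 2)" "chamber_at (1, 1) ((-1, 1), (-1, 0))" "[1, 2]"])
        (simp add: Q b | use b in presburger)+
  next
    assume Q: "Q = ((0, -1), (1, -1))" and b: "b mod 3 = 0"
    show ?thesis
      by (rule witness[of "(b + 2 * k, - k)" "(0, 0)" base_chamber "[0, 1, 0, 1, 0, 1, 0, 1]"])
        (simp add: Q b | use b in presburger)+
  next
    assume Q: "Q = ((0, -1), (1, -1))" and b: "b mod 3 = 1"
    show ?thesis
      by (rule witness[of "(b - 1 + 2 * k, - k)" "(1, 1)" base_chamber "[1, 2, 1, 2]"])
        (simp add: Q b | use b in presburger)+
  next
    assume Q: "Q = ((0, -1), (1, -1))" and b: "b mod 3 = 2"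
    show ?thesis
      by (rule witness[of "(b - 2 + 2 * k, - k)" "(2, 2)" "chamber_at (1, 1) ((1, -1), (1, 0))" "[1, 2, 1, 2]"])
        (simp add: Q b | use b in presburger)+
  qed
qed

lemma rotation_conjugate_order_2:
  assumes Q: "Q = ((-1, 0), (0, -1))"
  obtains m g0 t c where "face_centre m" "(Q, g0, t, c) \<in> set rotation_fixed_chambers"
    "(b + 3 * k, b) = g0 + (m - lattice_map Q m)"
proof -
  note witness = that[unfolded rotation_fixed_chambers_def face_centre_def lattice_map_def]
  consider "even b" "even k" | "even b" "odd k" | "odd b" "even k" | "odd b" "odd k"
    by blast
  then show ?thesis
  proof cases
    case bk: 1
    show ?thesis
      by (rule witness[of "((b + 3 * k) div 2, b div 2)" "(0, 0)" base_chamber "[0, 1, 0, 1, 0, 1]"])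
        (simp add: Q bk | use bk in presburger)+
  next
    case bk: 2
    show ?thesis
      by (rule witness[of "((b + 3 * (k - 1)) div 2, b div 2)" "(3, 0)" "chamber_at (1, 1) ((0, -1), (1, -1))"
            "[2, 0]"])
        (simp add: Q bk | use bk in presburger)+
  next
    case bk: 3
    show ?thesis
      by (rule witness[of "((b - 1 + 3 * k) div 2, (b - 1) div 2)" "(1, 1)" base_chamber "[2, 0]"])
        (simp add: Q bk | use bk in presburger)+
  next
    case bk: 4
    show ?thesis
      by (rule witness[of "((b - 1 + 3 * (k - 1)) div 2, (b - 1) div 2)" "(4, 1)"
            "chamber_at (1, 1) ((1, 0), (1, -1))" "[2, 0]"])
        (simp add: Q bk | use bk in presburger)+
  qed
qed

text \<open>Conjugating by the translation by m changes the translation part of affine_map Q g by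
  m - Q m, which reduces it to one of finitely many classes.\<close>

lemma rotation_conjugate:
  assumes "Q \<in> set rotation_shapes" "face_centre g"
  obtains m g0 t c where "face_centre m" "(Q, g0, t, c) \<in> set rotation_fixed_chambers"
    "g = g0 + (m - lattice_map Q m)"
proof -
  obtain b k where g: "g = (b + 3 * k, b)"
    using assms(2) face_centre_iff_ex by (metis prod.collapse)
  from assms(1) consider "Q = ((0, 1), (-1, 1)) \<or> Q = ((1, -1), (1, 0))"
    | "Q = ((-1, 1), (-1, 0)) \<or> Q = ((0, -1), (1, -1))" | "Q = ((-1, 0), (0, -1))"
    unfolding rotation_shapes_def by auto
  then show ?thesis
  proof cases
    case 1
    obtain m g0 t c where "face_centre m" "(Q, g0, t, c) \<in> set rotation_fixed_chambers"
      "(b + 3 * k, b) = g0 + (m - lattice_map Q m)"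
      by (rule rotation_conjugate_order_6[OF 1])
    then show ?thesis using that unfolding g by blast
  next
    case 2
    obtain m g0 t c where "face_centre m" "(Q, g0, t, c) \<in> set rotation_fixed_chambers"
      "(b + 3 * k, b) = g0 + (m - lattice_map Q m)"
      by (rule rotation_conjugate_order_3[OF 2])
    then show ?thesis using that unfolding g by blast
  next
    case 3
    obtain m g0 t c where "face_centre m" "(Q, g0, t, c) \<in> set rotation_fixed_chambers"
      "(b + 3 * k, b) = g0 + (m - lattice_map Q m)"
      by (rule rotation_conjugate_order_2[OF 3])
    then show ?thesis using that unfolding g by blast
  qed
qed

lemma shape_det_cases:
  "d \<in> set chamber_shapes \<Longrightarrow> shape_det d = 1 \<or> shape_det d = -1"
  by (drule chamber_shapes_cases) (elim disjE; simp add: shape_det_def)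

lemma shape_det_refl_shape: "shape_det (refl_shape d i) = - shape_det d"
  by (simp add: refl_shape_def shape_det_def algebra_simps)

lemma chamber_orientation_chamber_at: "chamber_orientation (chamber_at f d) = shape_det d"
  by (simp add: chamber_orientation_def chamber_at_def)

lemma chamber_orientation_refl:
  "hex_chamber t \<Longrightarrow> i < 3 \<Longrightarrow> chamber_orientation (hex_refl i t) = - chamber_orientation t"
  by (elim hex_chamberE) (simp add: hex_refl_chamber_at chamber_orientation_chamber_at shape_det_refl_shape)

lemma chamber_orientation_cases:
  "hex_chamber t \<Longrightarrow> chamber_orientation t = 1 \<or> chamber_orientation t = -1"
  by (elim hex_chamberE) (simp add: chamber_orientation_chamber_at shape_det_cases)

lemma lattice_map_shape_transfer:
  assumes "d \<in> set chamber_shapes"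
  shows "lattice_map (shape_transfer d' d) (fst d) = fst d'" "lattice_map (shape_transfer d' d) (snd d) = snd d'"
proof -
  obtain a b c e where d: "d = ((a, b), (c, e))"
    by (metis prod.collapse)
  obtain a1 b1 a2 b2 where d': "d' = ((a1, b1), (a2, b2))"
    by (metis prod.collapse)
  have dd: "(a * e - b * c) * (a * e - b * c) = 1"
    using shape_det_cases[OF assms] unfolding d shape_det_def by auto
  have "lattice_map (shape_transfer d' d) (fst d) =
      ((a * e - b * c) * (a * e - b * c) * a1, (a * e - b * c) * (a * e - b * c) * b1)"
    unfolding d d' shape_transfer_def lattice_map_def shape_det_def Let_def by (simp add: algebra_simps)
  then show "lattice_map (shape_transfer d' d) (fst d) = fst d'"
    using dd d' by simp
  have "lattice_map (shape_transfer d' d) (snd d) =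
      ((a * e - b * c) * (a * e - b * c) * a2, (a * e - b * c) * (a * e - b * c) * b2)"
    unfolding d d' shape_transfer_def lattice_map_def shape_det_def Let_def by (simp add: algebra_simps)
  then show "lattice_map (shape_transfer d' d) (snd d) = snd d'"
    using dd d' by simp
qed

lemma shape_transfer_in:
  "d \<in> set chamber_shapes \<Longrightarrow> d' \<in> set chamber_shapes \<Longrightarrow> shape_transfer d' d \<in> set chamber_shapes"
  by (drule chamber_shapes_cases)+ (elim disjE; simp add: shape_transfer_def shape_det_def chamber_shapes_def Let_def)

lemma shape_transfer_rotation:
  "d \<in> set chamber_shapes \<Longrightarrow> d' \<in> set chamber_shapes \<Longrightarrow> shape_det d' = shape_det d \<Longrightarrow>
    shape_transfer d' d \<in> set (unit_shape # rotation_shapes)"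
  by (drule chamber_shapes_cases)+
    (elim disjE; simp add: shape_transfer_def shape_det_def unit_shape_def rotation_shapes_def Let_def)

lemma affine_map_conjugate:
  "chamber_map (affine_map Q (g0 + (m - lattice_map Q m))) (chamber_map (transl m) t) =
    chamber_map (transl m) (chamber_map (affine_map Q g0) t)"
  by (cases t rule: prod_cases3) (simp add: chamber_map_def affine_map_def lattice_map_def algebra_simps)

context hexagonal_map
begin

lemma word_act_rotation_word_neq:
  assumes "c \<in> set rotation_words" "z \<in> F"
  shows "word_act r c z \<noteq> z"
proof -
  have face: "word_act r (concat (replicate k [0, 1])) z \<noteq> z" if "0 < k" "k < 6" for k
    using face_rotation_neq[OF assms(2) that] word_act_rotation_pow(1) by metis
  have vertex: "word_act r (concat (replicate k [1, 2])) z \<noteq> z" if "0 < k" "k < 3" for k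
    using vertex_rotation_neq[OF assms(2) that] word_act_rotation_pow(2) by metis
  have "word_act r [2, 0] z \<noteq> z"
    using r0_r2_neq[OF assms(2)] by simp
  moreover have "word_act r [0, 1] z \<noteq> z" "word_act r [0, 1, 0, 1] z \<noteq> z" "word_act r [0, 1, 0, 1, 0, 1] z \<noteq> z"
    "word_act r [0, 1, 0, 1, 0, 1, 0, 1] z \<noteq> z" "word_act r [0, 1, 0, 1, 0, 1, 0, 1, 0, 1] z \<noteq> z"
    using face[of 1] face[of 2] face[of 3] face[of 4] face[of 5] by (simp_all add: numeral_eq_Suc)
  moreover have "word_act r [1, 2] z \<noteq> z" "word_act r [1, 2, 1, 2] z \<noteq> z"
    using vertex[of 1] vertex[of 2] by (simp_all add: numeral_eq_Suc)
  ultimately show ?thesis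
    using assms(1) unfolding rotation_words_def by auto
qed

lemma develop_orientation:
  assumes s: "\<forall>x\<in>F. \<forall>i<3. s (r i x) \<noteq> s x" and t: "hex_chamber t"
  shows "s (develop t) \<longleftrightarrow> (s (develop base_chamber) \<longleftrightarrow> chamber_orientation t = 1)"
proof (rule hex_chamber_induct[OF base_chamber_hex _ _ t])
  show "s (develop base_chamber) \<longleftrightarrow> (s (develop base_chamber) \<longleftrightarrow> chamber_orientation base_chamber = 1)"
    by (simp add: base_chamber_def chamber_orientation_chamber_at shape_det_def)
next
  fix t and i :: nat
  assume t: "hex_chamber t" "i < 3"
    and IH: "s (develop t) \<longleftrightarrow> (s (develop base_chamber) \<longleftrightarrow> chamber_orientation t = 1)"
  have "s (develop (hex_refl i t)) \<longleftrightarrow> \<not> s (develop t)"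
    using s develop_in[OF t(1)] t(2) unfolding develop_refl[OF t] by blast
  moreover have "chamber_orientation (hex_refl i t) = 1 \<longleftrightarrow> chamber_orientation t \<noteq> 1"
    using chamber_orientation_refl[OF t] chamber_orientation_cases[OF t(1)] by auto
  ultimately show
    "s (develop (hex_refl i t)) \<longleftrightarrow> (s (develop base_chamber) \<longleftrightarrow> chamber_orientation (hex_refl i t) = 1)"
    using IH by blast
qed

lemma develop_eq_orientation:
  assumes "hex_chamber u1" "hex_chamber u2" "develop u1 = develop u2"
  shows "chamber_orientation u1 = chamber_orientation u2"
proof -
  obtain s :: "'a \<Rightarrow> bool" where s: "\<forall>x\<in>F. \<forall>i<3. s (r i x) \<noteq> s x"
    using orientable unfolding orientable_map_def by blast
  show ?thesis
    using develop_orientation[OF s assms(1)] develop_orientation[OF s assms(2)] assms(3)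
      chamber_orientation_cases[OF assms(1)] chamber_orientation_cases[OF assms(2)]
    by auto
qed

lemma develop_invariant:
  assumes "hex_chamber u" "Q \<in> set chamber_shapes" "face_centre g"
    "develop (chamber_map (affine_map Q g) u) = develop u" "hex_chamber t"
  shows "develop (chamber_map (affine_map Q g) t) = develop t"
proof (rule hex_chamber_induct[where P = "\<lambda>t. develop (chamber_map (affine_map Q g) t) = develop t",
      OF assms(1) assms(4) _ assms(5)])
  fix t and i :: nat
  assume t: "hex_chamber t" "i < 3" and IH: "develop (chamber_map (affine_map Q g) t) = develop t"
  have "develop (chamber_map (affine_map Q g) (hex_refl i t)) = develop (hex_refl i (chamber_map (affine_map Q g) t))"
    by (simp add: hex_refl_chamber_map[OF t(2)])
  also have "\<dots> = r i (develop t)"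
    using develop_refl[OF hex_chamber_map[OF assms(2,3) t(1)] t(2)] IH by simp
  finally show "develop (chamber_map (affine_map Q g) (hex_refl i t)) = develop (hex_refl i t)"
    using develop_refl[OF t] by simp
qed

text \<open>A rotation of the tiling fixes a cell, so it moves some chamber along a rotation word;
  the developing map cannot identify the two chambers.\<close>

lemma develop_not_rotation_invariant:
  assumes "Q \<in> set rotation_shapes" "face_centre g"
    and inv: "\<And>t. hex_chamber t \<Longrightarrow> develop (chamber_map (affine_map Q g) t) = develop t"
  shows False
proof -
  obtain m g0 t0 c where m: "face_centre m" and fixed: "(Q, g0, t0, c) \<in> set rotation_fixed_chambers"
    and g: "g = g0 + (m - lattice_map Q m)"
    using rotation_conjugate[OF assms(1,2)] .
  have t0: "hex_chamber t0" "c \<in> set rotation_words" "chamber_map (affine_map Q g0) t0 = word_act hex_refl c t0"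
    using rotation_fixed_chambers_valid fixed unfolding list_all_iff by fastforce+
  have c: "set c \<subseteq> {..<3}"
    using t0(2) unfolding rotation_words_def by auto
  define t where "t = chamber_map (transl m) t0"
  have t: "hex_chamber t"
    unfolding t_def by (rule hex_chamber_transl[OF m t0(1)])
  have "chamber_map (affine_map Q g) t = chamber_map (transl m) (chamber_map (affine_map Q g0) t0)"
    unfolding t_def g by (rule affine_map_conjugate)
  also have "\<dots> = word_act hex_refl c t"
    unfolding t0(3) t_def transl_def by (rule word_act_chamber_map[OF c, symmetric])
  finally have "develop t = word_act r c (develop t)"
    using inv[OF t] develop_word_act[OF t c] by simp
  then show False
    using word_act_rotation_word_neq[OF t0(2) develop_in[OF t]] by simp
qed

lemma develop_deck_transformation:
  assumes "hex_chamber u1" "hex_chamber u2" "develop u1 = develop u2"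
  obtains g where "face_centre g" "u2 = chamber_map (transl g) u1"
    "\<And>t. hex_chamber t \<Longrightarrow> develop (chamber_map (transl g) t) = develop t"
proof -
  obtain f1 d where u1: "u1 = chamber_at f1 d" "face_centre f1" "d \<in> set chamber_shapes"
    using assms(1) by (rule hex_chamberE)
  obtain f2 d' where u2: "u2 = chamber_at f2 d'" "face_centre f2" "d' \<in> set chamber_shapes"
    using assms(2) by (rule hex_chamberE)
  define Q where "Q = shape_transfer d' d"
  define g where "g = f2 - lattice_map Q f1"
  have Q: "Q \<in> set chamber_shapes"
    unfolding Q_def by (rule shape_transfer_in[OF u1(3) u2(3)])
  have g: "face_centre g"
    unfolding g_def by (rule face_centre_diff[OF u2(2) face_centre_lattice_map[OF Q u1(2)]])
  have u12: "chamber_map (affine_map Q g) u1 = u2"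
    unfolding u1(1) u2(1) chamber_map_chamber_at Q_def lattice_map_shape_transfer[OF u1(3)] g_def
    by (simp add: affine_map_def)
  have inv: "develop (chamber_map (affine_map Q g) t) = develop t" if "hex_chamber t" for t
    using develop_invariant[OF assms(1) Q g _ that] u12 assms(3) by simp
  have "shape_det d' = shape_det d"
    using develop_eq_orientation[OF assms] unfolding u1(1) u2(1) chamber_orientation_chamber_at by simp
  then have "Q \<in> set (unit_shape # rotation_shapes)"
    unfolding Q_def by (rule shape_transfer_rotation[OF u1(3) u2(3)])
  moreover have "Q \<notin> set rotation_shapes"
    using develop_not_rotation_invariant[OF _ g inv] by blast
  ultimately have "affine_map Q g = transl g"
    by (simp add: transl_def)
  then show ?thesis
    using that g u12 inv by simp
qed

end

section \<open>Goldberg-Coxeter triangles in the hexagonal tiling\<close>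

text \<open>Gluing the triangle GC(l,0) into every chamber of B_{T_H} retiles the plane by T_H scaled by l;
  for GC(l,l) the scaled tiling is moreover mapped by gc11_map, a rotation by 30 degrees composed
  with a scaling by sqrt 3 that maps the triangle GC(1,0) onto GC(1,1). gc_place l m u t is the
  chamber of B_{T_H} at position t in the copy of the triangle glued into the chamber u.\<close>

definition gc11_map :: "pt \<Rightarrow> pt" where
  "gc11_map p = (fst p - snd p, fst p + 2 * snd p)"

definition gc11_shape :: "pt \<times> pt \<Rightarrow> pt \<times> pt" where
  "gc11_shape d = the (map_of
     [(((1, 0), (0, 1)), ((1, 0), (0, 1))), (((1, 0), (1, -1)), ((0, 1), (1, 0))),
      (((-1, 0), (0, -1)), ((-1, 0), (0, -1))), (((-1, 0), (-1, 1)), ((0, -1), (-1, 0))),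
      (((0, 1), (1, 0)), ((-1, 1), (0, 1))), (((0, 1), (-1, 1)), ((0, 1), (-1, 1))),
      (((0, -1), (-1, 0)), ((1, -1), (0, -1))), (((0, -1), (1, -1)), ((0, -1), (1, -1))),
      (((1, -1), (1, 0)), ((1, -1), (1, 0))), (((1, -1), (0, -1)), ((1, 0), (1, -1))),
      (((-1, 1), (-1, 0)), ((-1, 1), (-1, 0))), (((-1, 1), (0, 1)), ((-1, 0), (-1, 1)))] d)"

definition gc_shape :: "nat \<Rightarrow> pt \<times> pt \<Rightarrow> pt \<times> pt" where
  "gc_shape m d = (if m = 0 then d else gc11_shape d)"

definition gc_scale :: "nat \<Rightarrow> nat \<Rightarrow> pt \<Rightarrow> pt" where
  "gc_scale l m f =
     (if m = 0 then (int l * fst f, int l * snd f) else (int l * fst (gc11_map f), int l * snd (gc11_map f)))"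

definition gc_place :: "nat \<Rightarrow> nat \<Rightarrow> hch \<Rightarrow> hch \<Rightarrow> hch" where
  "gc_place l m u t =
     (case u of (v, w, f) \<Rightarrow> chamber_map (affine_map (gc_shape m (v - f, w - f)) (gc_scale l m f)) t)"

lemma gc_place_chamber_at:
  "gc_place l m (chamber_at f d) t = chamber_map (affine_map (gc_shape m d) (gc_scale l m f)) t"
  by (simp add: gc_place_def chamber_at_def)

text \<open>gc_side divided by the positive constant side_factor m k * l: an affine function of points
  (scaled by 6) vanishing on the side of the triangle opposite corner k and positive inside.\<close>

definition side_fn :: "nat \<Rightarrow> nat \<Rightarrow> nat \<Rightarrow> pt \<Rightarrow> int" where
  "side_fn l m k p =
     (if m = 0 then (if k = 0 then fst p - snd p else if k = 1 then snd p else 6 * int l - fst p - snd p)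
      else (if k = 0 then fst p else if k = 1 then snd p - fst p else 18 * int l - fst p - 2 * snd p))"

definition side_factor :: "nat \<Rightarrow> nat \<Rightarrow> int" where
  "side_factor m k =
     (if m = 0 then (if k = 0 then 3 else if k = 1 then 6 else 3) else (if k = 0 then 9 else if k = 1 then 6 else 3))"

lemma gc_side_eq_side_fn:
  assumes "m = 0 \<or> m = l" "k < 3"
  shows "gc_side l m k p = side_factor m k * int l * side_fn l m k p"
proof -
  have k: "k = 0 \<or> k = 1 \<or> k = 2" using assms(2) by auto
  from assms(1) show ?thesis
  proof
    assume m: "m = 0"
    from k show ?thesis unfolding m
      by (elim disjE)
        (simp_all add: gc_side_def gc_corner6_def cross2_def side_fn_def side_factor_def Let_def algebra_simps)
  next
    assume m: "m = l"
    from k show ?thesis unfolding m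
      by (elim disjE)
        (simp_all add: gc_side_def gc_corner6_def cross2_def side_fn_def side_factor_def Let_def algebra_simps)
  qed
qed

lemma side_factor_pos: "k < 3 \<Longrightarrow> side_factor m k > 0"
  by (simp add: side_factor_def)

lemma side_fn_corner_pos:
  assumes "m = 0 \<or> m = l" "k < 3" "l \<ge> 1"
  shows "side_fn l m k (gc_corner6 l m k) > 0"
proof -
  have k: "k = 0 \<or> k = 1 \<or> k = 2" using assms(2) by auto
  from assms(1) show ?thesis
  proof
    assume m: "m = 0"
    from k show ?thesis unfolding m using assms(3) by (elim disjE) (simp_all add: side_fn_def gc_corner6_def)
  next
    assume m: "m = l"
    from k show ?thesis unfolding m using assms(3) by (elim disjE) (simp_all add: side_fn_def gc_corner6_def)
  qed
qed

lemma gc_chamber_iff: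
  assumes "m = 0 \<or> m = l" "l \<ge> 1"
  shows "gc_chamber l m t \<longleftrightarrow> hex_chamber t \<and> (\<forall>k<3. side_fn l m k (centroid6 t) > 0)"
proof -
  have "gc_side l m k (centroid6 t) * gc_side l m k (gc_corner6 l m k) > 0 \<longleftrightarrow> side_fn l m k (centroid6 t) > 0"
    if k: "k < 3" for k
  proof -
    have pos: "side_factor m k * int l * (side_factor m k * int l * side_fn l m k (gc_corner6 l m k)) > 0"
      using side_factor_pos[OF k] side_fn_corner_pos[OF assms(1) k assms(2)] assms(2) by simp
    have "gc_side l m k (centroid6 t) * gc_side l m k (gc_corner6 l m k) =
       side_fn l m k (centroid6 t) * (side_factor m k * int l * (side_factor m k * int l * side_fn l m k (gc_corner6 l m k)))"
      unfolding gc_side_eq_side_fn[OF assms(1) k] by (simp add: algebra_simps)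
    thus ?thesis using pos by (metis mult_pos_pos zero_less_mult_pos2)
  qed
  thus ?thesis unfolding gc_chamber_def by auto
qed

lemma wall_on_side_iff:
  assumes "m = 0 \<or> m = l" "l \<ge> 1" "k < 3"
  shows "wall_on_side l m i t k \<longleftrightarrow> (\<forall>j<3. j \<noteq> i \<longrightarrow> side_fn l m k (chpt6 t j) = 0)"
proof -
  have nz: "side_factor m k * int l \<noteq> 0" using side_factor_pos[OF assms(3), of m] assms(2) by simp
  show ?thesis unfolding wall_on_side_def gc_side_eq_side_fn[OF assms(1,3)] using nz by simp
qed

lemma all_less_3: "(\<forall>j<3. P j) \<longleftrightarrow> P 0 \<and> P 1 \<and> P (2::nat)"
  by (auto simp: less_Suc_eq numeral_eq_Suc)

lemma chpt6_chamber_at: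
  "chpt6 (chamber_at f d) 0 = (6 * fst f + 6 * fst (fst d), 6 * snd f + 6 * snd (fst d))"
  "chpt6 (chamber_at f d) 1 = (6 * fst f + 3 * (fst (fst d) + fst (snd d)), 6 * snd f + 3 * (snd (fst d) + snd (snd d)))"
  "chpt6 (chamber_at f d) 2 = (6 * fst f, 6 * snd f)"
  by (simp_all add: chpt6_def chamber_at_def algebra_simps)

definition side_fn_linear :: "nat \<Rightarrow> nat \<Rightarrow> pt \<Rightarrow> int" where
  "side_fn_linear m k p =
     (if m = 0 then (if k = 0 then fst p - snd p else if k = 1 then snd p else - fst p - snd p)
      else (if k = 0 then fst p else if k = 1 then snd p - fst p else - fst p - 2 * snd p))"

definition side_modulus :: "nat \<Rightarrow> nat \<Rightarrow> int" where
  "side_modulus m k = (if m = 0 then (if k = 0 then 18 else 6) else (if k = 1 then 18 else if k = 0 then 6 else 18))"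

lemma side_fn_add:
  "side_fn l m k (x1 + y1, x2 + y2) = side_fn l m k (x1, x2) + side_fn_linear m k (y1, y2)"
  by (simp add: side_fn_def side_fn_linear_def algebra_simps)

lemma side_fn_face_centre:
  assumes "k < 3" "m = 0 \<or> m = l" "l \<ge> 1"
  shows "\<exists>n. side_fn l m k (6 * (b + 3 * q), 6 * b) = side_modulus m k * n"
proof -
  have k: "k = 0 \<or> k = 1 \<or> k = 2" using assms(1) by auto
  show ?thesis
  proof (cases "m = 0")
    case m: True
    from k show ?thesis
    proof (elim disjE)
      assume "k = 0" thus ?thesis using m by (simp add: side_fn_def side_modulus_def)
    next
      assume "k = 1" thus ?thesis using m by (simp add: side_fn_def side_modulus_def)
    next
      assume "k = 2" thus ?thesis using m
        by (intro exI[of _ "int l - 2 * b - 3 * q"]) (simp add: side_fn_def side_modulus_def algebra_simps)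
    qed
  next
    case m: False
    from k show ?thesis
    proof (elim disjE)
      assume "k = 0" thus ?thesis using m
        by (intro exI[of _ "b + 3 * q"]) (simp add: side_fn_def side_modulus_def algebra_simps)
    next
      assume "k = 1" thus ?thesis using m
        by (intro exI[of _ "- q"]) (simp add: side_fn_def side_modulus_def algebra_simps)
    next
      assume "k = 2" thus ?thesis using m
        by (intro exI[of _ "int l - b - q"]) (simp add: side_fn_def side_modulus_def algebra_simps)
    qed
  qed
qed

lemma side_fn_offsets:
  fixes m :: nat
  assumes "d \<in> set chamber_shapes" "k < 3"
  defines "a \<equiv> side_fn_linear m k (6 * fst (fst d), 6 * snd (fst d))"
    and "b \<equiv> side_fn_linear m k (3 * (fst (fst d) + fst (snd d)), 3 * (snd (fst d) + snd (snd d)))"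
  shows "\<bar>a\<bar> \<le> side_modulus m k \<and> \<bar>b\<bar> \<le> side_modulus m k \<and>
    (a \<ge> 0 \<and> b \<ge> 0 \<or> a \<le> 0 \<and> b \<le> 0)"
proof -
  have k: "k = 0 \<or> k = 1 \<or> k = 2" using assms(2) by auto
  show ?thesis
  proof (cases "m = 0")
    case True
    from chamber_shapes_cases[OF assms(1)] k show ?thesis
      using True by (elim disjE; simp add: a_def b_def side_fn_linear_def side_modulus_def)
  next
    case False
    from chamber_shapes_cases[OF assms(1)] k show ?thesis
      using False by (elim disjE; simp add: a_def b_def side_fn_linear_def side_modulus_def)
  qed
qed

lemma same_sign_shift:
  assumes "(M::int) > 0" "X = M * n" "\<bar>o0\<bar> \<le> M" "\<bar>o1\<bar> \<le> M"
    "(o0 \<ge> 0 \<and> o1 \<ge> 0) \<or> (o0 \<le> 0 \<and> o1 \<le> 0)"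
  shows "(X + o0 \<ge> 0 \<and> X + o1 \<ge> 0 \<and> X \<ge> 0) \<or> (X + o0 \<le> 0 \<and> X + o1 \<le> 0 \<and> X \<le> 0)"
proof -
  consider "n \<ge> 1" | "n = 0" | "n \<le> -1" by arith
  then show ?thesis
  proof cases
    case 1
    have "M * 1 \<le> M * n" using 1 assms(1) by (intro mult_left_mono) auto
    hence "X \<ge> M" using assms(2) by simp
    thus ?thesis using assms(3,4) by auto
  next
    case 2 thus ?thesis using assms by auto
  next
    case 3
    have "M * n \<le> M * (-1)" using 3 assms(1) by (intro mult_left_mono) auto
    hence "X \<le> - M" using assms(2) by simp
    thus ?thesis using assms(3,4) by auto
  qed
qed

text \<open>The sides of the triangle run along mirrors of the barycentric subdivision of T_H: at a face
  centre side_fn is a multiple of side_modulus, which bounds its variation over a chamber at that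
  face centre, so no chamber crosses a side.\<close>

lemma chamber_at_side_sign:
  assumes "d \<in> set chamber_shapes" "k < 3" "m = 0 \<or> m = l" "l \<ge> 1"
  shows "(\<forall>j<3. side_fn l m k (chpt6 (chamber_at (b + 3 * q, b) d) j) \<ge> 0) \<or>
    (\<forall>j<3. side_fn l m k (chpt6 (chamber_at (b + 3 * q, b) d) j) \<le> 0)"
proof -
  obtain n where n: "side_fn l m k (6 * (b + 3 * q), 6 * b) = side_modulus m k * n"
    using side_fn_face_centre[OF assms(2,3,4)] by blast
  have M: "side_modulus m k > 0" by (simp add: side_modulus_def)
  have e: "side_fn l m k (chpt6 (chamber_at (b + 3 * q, b) d) 0) =
      side_fn l m k (6 * (b + 3 * q), 6 * b) + side_fn_linear m k (6 * fst (fst d), 6 * snd (fst d))"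
    "side_fn l m k (chpt6 (chamber_at (b + 3 * q, b) d) 1) =
      side_fn l m k (6 * (b + 3 * q), 6 * b) +
      side_fn_linear m k (3 * (fst (fst d) + fst (snd d)), 3 * (snd (fst d) + snd (snd d)))"
    "side_fn l m k (chpt6 (chamber_at (b + 3 * q, b) d) 2) = side_fn l m k (6 * (b + 3 * q), 6 * b)"
    unfolding chpt6_chamber_at by (simp_all add: side_fn_add)
  show ?thesis
    unfolding all_less_3 e using same_sign_shift[OF M n] side_fn_offsets[OF assms(1,2), of m] by blast
qed


lemma hex_chamber_side_sign:
  assumes "hex_chamber t" "k < 3" "m = 0 \<or> m = l" "l \<ge> 1"
  shows "(\<forall>j<3. side_fn l m k (chpt6 t j) \<ge> 0) \<or> (\<forall>j<3. side_fn l m k (chpt6 t j) \<le> 0)"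
proof -
  from assms(1) obtain f d where t: "t = chamber_at f d" "face_centre f" "d \<in> set chamber_shapes"
    by (rule hex_chamberE)
  obtain f1 f2 where ff: "f = (f1, f2)" by (cases f)
  obtain q where q: "f1 = f2 + 3 * q" using t(2) face_centre_iff_ex ff by auto
  have f: "f = (f2 + 3 * q, f2)" using q ff by simp
  show ?thesis unfolding t(1) f by (rule chamber_at_side_sign[OF t(3) assms(2-4)])
qed

lemma side_fn_centroid:
  "3 * side_fn l m k (centroid6 t) = side_fn l m k (chpt6 t 0) + side_fn l m k (chpt6 t 1) + side_fn l m k (chpt6 t 2)"
  by (cases t) (simp add: side_fn_def centroid6_def chpt6_def algebra_simps)

lemma chpt6_hex_refl:
  "i < 3 \<Longrightarrow> j < 3 \<Longrightarrow> j \<noteq> i \<Longrightarrow> chpt6 (hex_refl i t) j = chpt6 t j"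
proof -
  assume a: "i < 3" "j < 3" "j \<noteq> i"
  obtain v w f where t: "t = (v,w,f)" by (cases t) auto
  have "i = 0 \<or> i = 1 \<or> i = 2" "j = 0 \<or> j = 1 \<or> j = 2" using a by auto
  thus ?thesis using a(3) unfolding t by (elim disjE) (simp_all add: hex_refl_def chpt6_def algebra_simps)
qed

lemma wall_of_crossing:
  assumes "hex_chamber t" "i < 3" "k < 3" "m = 0 \<or> m = l" "l \<ge> 1"
  "side_fn l m k (centroid6 t) > 0" "side_fn l m k (centroid6 (hex_refl i t)) \<le> 0"
  shows "\<forall>j<3. j \<noteq> i \<longrightarrow> side_fn l m k (chpt6 t j) = 0"
proof (intro allI impI)
  fix j assume j: "j < 3" "j \<noteq> i"
  let ?t' = "hex_refl i t"
  have h': "hex_chamber ?t'" by (rule hex_chamber_refl[OF assms(1,2)])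
  have same: "side_fn l m k (chpt6 ?t' j) = side_fn l m k (chpt6 t j)"
    using chpt6_hex_refl[OF assms(2) j] by simp
  have s1: "side_fn l m k (chpt6 t 0) + side_fn l m k (chpt6 t 1) + side_fn l m k (chpt6 t 2) > 0"
    using side_fn_centroid[of l m k t] assms(6) by linarith
  have s2: "side_fn l m k (chpt6 ?t' 0) + side_fn l m k (chpt6 ?t' 1) + side_fn l m k (chpt6 ?t' 2) \<le> 0"
    using side_fn_centroid[of l m k ?t'] assms(7) by linarith
  have tpos: "\<forall>j<3. side_fn l m k (chpt6 t j) \<ge> 0"
    using hex_chamber_side_sign[OF assms(1,3,4,5)] s1 unfolding all_less_3 by auto
  have jj: "j = 0 \<or> j = 1 \<or> j = 2" using j by auto
  from hex_chamber_side_sign[OF h' assms(3,4,5)] show "side_fn l m k (chpt6 t j) = 0"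
  proof
    assume a: "\<forall>j<3. side_fn l m k (chpt6 ?t' j) \<ge> 0"
    have "\<forall>j<3. side_fn l m k (chpt6 ?t' j) = 0" using a s2 unfolding all_less_3 by auto
    thus ?thesis using same j(1) by auto
  next
    assume a: "\<forall>j<3. side_fn l m k (chpt6 ?t' j) \<le> 0"
    thus ?thesis using same tpos j(1) by force
  qed
qed


definition side_refl :: "nat \<Rightarrow> nat \<Rightarrow> nat \<Rightarrow> pt \<Rightarrow> pt" where
  "side_refl l m k p =
     (if m = 0 then
        (if k = 0 then (snd p, fst p) else if k = 1 then (fst p + snd p, - snd p) else (int l - snd p, int l - fst p))
      else (if k = 0 then (- fst p, fst p + snd p) else if k = 1 then (snd p, fst p) else (fst p, 3 * int l - fst p - snd p)))"

lemma side_refl_chamber_at_wall: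
  assumes "d \<in> set chamber_shapes" "i < 3" "k < 3" "m = 0 \<or> m = l" "l \<ge> 1"
    "\<forall>j<3. j \<noteq> i \<longrightarrow> side_fn l m k (chpt6 (chamber_at (b + 3 * q, b) d) j) = 0"
  shows "chamber_map (side_refl l m k) (chamber_at (b + 3 * q, b) d) = hex_refl i (chamber_at (b + 3 * q, b) d)"
proof -
  have ik: "i = 0 \<or> i = 1 \<or> i = 2" "k = 0 \<or> k = 1 \<or> k = 2"
    using assms(2,3) by auto
  from assms(4) show ?thesis
  proof
    assume m: "m = 0"
    from chamber_shapes_cases[OF assms(1)] ik assms(6) show ?thesis
      unfolding m all_less_3 chpt6_chamber_at
      by (elim disjE, simp_all add: side_fn_def side_refl_def chamber_map_def chamber_at_def hex_refl_def,
          presburger+)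
  next
    assume m: "m = l"
    have l0: "l \<noteq> 0"
      using assms(5) by simp
    from chamber_shapes_cases[OF assms(1)] ik assms(6) show ?thesis
      unfolding m all_less_3 chpt6_chamber_at
      by (elim disjE, simp_all add: side_fn_def side_refl_def chamber_map_def chamber_at_def hex_refl_def l0,
          (presburger+)?)
  qed
qed

lemma side_refl_wall:
  assumes "hex_chamber t" "i < 3" "k < 3" "m = 0 \<or> m = l" "l \<ge> 1" "wall_on_side l m i t k"
  shows "chamber_map (side_refl l m k) t = hex_refl i t"
proof -
  from assms(1) obtain f d where t: "t = chamber_at f d" "face_centre f" "d \<in> set chamber_shapes"
    by (rule hex_chamberE)
  obtain f2 q where f: "f = (f2 + 3 * q, f2)"
    using t(2) face_centre_iff_ex by (metis prod.collapse)
  have "\<forall>j<3. j \<noteq> i \<longrightarrow> side_fn l m k (chpt6 t j) = 0"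
    using assms(6) wall_on_side_iff[OF assms(4,5,3)] by simp
  then show ?thesis
    unfolding t(1) f by (rule side_refl_chamber_at_wall[OF t(3) assms(2-5)])
qed

lemma exists_wall_on_side:
  assumes "gc_chamber l m t" "\<not> gc_chamber l m (hex_refl i t)" "i < 3" "m = 0 \<or> m = l" "l \<ge> 1"
  shows "\<exists>k<3. wall_on_side l m i t k"
proof -
  have ht: "hex_chamber t" "\<forall>k<3. side_fn l m k (centroid6 t) > 0"
    using assms(1) gc_chamber_iff[OF assms(4,5)] by auto
  have ht': "hex_chamber (hex_refl i t)" by (rule hex_chamber_refl[OF ht(1) assms(3)])
  obtain k where k: "k < 3" "side_fn l m k (centroid6 (hex_refl i t)) \<le> 0"
    using assms(2) ht' gc_chamber_iff[OF assms(4,5)] by (auto simp: not_less)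
  have "\<forall>j<3. j \<noteq> i \<longrightarrow> side_fn l m k (chpt6 t j) = 0"
    by (rule wall_of_crossing[OF ht(1) assms(3) k(1) assms(4,5)]) (use ht(2) k in auto)
  thus ?thesis using wall_on_side_iff[OF assms(4,5) k(1)] k(1) by blast
qed

lemma gc_shape_in:
  "d \<in> set chamber_shapes \<Longrightarrow> gc_shape m d \<in> set chamber_shapes"
  by (drule chamber_shapes_cases) (elim disjE; simp add: gc_shape_def gc11_shape_def chamber_shapes_def)

lemma face_centre_gc_scale: "face_centre f \<Longrightarrow> face_centre (gc_scale l m f)"
proof -
  assume a: "face_centre f"
  obtain k where k: "fst f = snd f + 3 * k" using a face_centre_iff_ex by auto
  show ?thesis
  proof (cases "m = 0")
    case True
    have "fst (gc_scale l m f) = snd (gc_scale l m f) + 3 * (int l * k)"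
      using True k by (simp add: gc_scale_def algebra_simps)
    thus ?thesis using face_centre_iff_ex by blast
  next
    case False
    have "fst (gc_scale l m f) = snd (gc_scale l m f) + 3 * (- int l * snd f)"
      using False by (simp add: gc_scale_def gc11_map_def algebra_simps)
    thus ?thesis using face_centre_iff_ex by blast
  qed
qed

lemma hex_chamber_gc_place:
  "hex_chamber u \<Longrightarrow> hex_chamber t \<Longrightarrow> hex_chamber (gc_place l m u t)"
proof -
  assume a: "hex_chamber u" "hex_chamber t"
  from a(1) obtain f d where u: "u = chamber_at f d" "face_centre f" "d \<in> set chamber_shapes"
    by (rule hex_chamberE)
  show ?thesis
    unfolding u(1) gc_place_chamber_at
    by (rule hex_chamber_map[OF gc_shape_in[OF u(3)] face_centre_gc_scale[OF u(2)] a(2)])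
qed

lemma gc_place_hex_refl:
  "i < 3 \<Longrightarrow> gc_place l m u (hex_refl i t) = hex_refl i (gc_place l m u t)"
  by (cases u) (simp add: gc_place_def hex_refl_chamber_map)

lemma affine_map_gc_refl:
  assumes "d \<in> set chamber_shapes" "k < 3" "m = 0 \<or> m = l" "l \<ge> 1"
  shows "affine_map (gc_shape m (refl_shape d k)) (gc_scale l m (f + refl_shift d k)) =
    affine_map (gc_shape m d) (gc_scale l m f) \<circ> side_refl l m k"
proof
  fix p
  have k: "k = 0 \<or> k = 1 \<or> k = 2"
    using assms(2) by auto
  from assms(3) show "affine_map (gc_shape m (refl_shape d k)) (gc_scale l m (f + refl_shift d k)) p =
    (affine_map (gc_shape m d) (gc_scale l m f) \<circ> side_refl l m k) p"
  proof
    assume "m = 0"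
    with k show ?thesis
      by (elim disjE) (simp_all add: gc_shape_def gc_scale_def refl_shape_def refl_shift_def side_refl_def
          affine_map_def lattice_map_def prod_eq_iff algebra_simps)
  next
    assume m: "m = l"
    have "l \<noteq> 0"
      using assms(4) by simp
    with k chamber_shapes_cases[OF assms(1)] show ?thesis
      unfolding m
      by (elim disjE; simp add: gc_shape_def gc11_shape_def gc_scale_def gc11_map_def refl_shape_def
          refl_shift_def side_refl_def affine_map_def lattice_map_def prod_eq_iff algebra_simps)
  qed
qed

text \<open>Adjacent chambers of the barycentric subdivision carry mirror images of the triangle:
  reflecting the chamber u in its wall opposite vertex k reflects its copy in side k.\<close>

lemma gc_place_refl_base:
  assumes "hex_chamber u" "k < 3" "m = 0 \<or> m = l" "l \<ge> 1"
  shows "gc_place l m (hex_refl k u) t = gc_place l m u (chamber_map (side_refl l m k) t)"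
proof -
  from assms(1) obtain f d where u: "u = chamber_at f d" "face_centre f" "d \<in> set chamber_shapes"
    by (rule hex_chamberE)
  show ?thesis
    unfolding u(1) hex_refl_chamber_at[OF assms(2)] gc_place_chamber_at chamber_map_comp
      affine_map_gc_refl[OF u(3) assms(2-4)] ..
qed

lemma gc_place_glue:
  assumes "hex_chamber u" "hex_chamber t" "i < 3" "k < 3" "m = 0 \<or> m = l" "l \<ge> 1"
    "wall_on_side l m i t k"
  shows "gc_place l m (hex_refl k u) t = hex_refl i (gc_place l m u t)"
  unfolding gc_place_refl_base[OF assms(1,4,5,6)] side_refl_wall[OF assms(2-7)] gc_place_hex_refl[OF assms(3)] ..

lemma gc_scale_add: "gc_scale l m (f + g) = gc_scale l m f + gc_scale l m g"
  by (simp add: gc_scale_def gc11_map_def algebra_simps)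

lemma gc_place_transl:
  "gc_place l m (chamber_map (transl a) u) t = chamber_map (transl (gc_scale l m a)) (gc_place l m u t)"
proof -
  obtain v w f where u: "u = (v, w, f)" by (cases u) auto
  obtain x y z where t: "t = (x, y, z)" by (cases t) auto
  show ?thesis unfolding u t
    by (simp add: gc_place_def chamber_map_def gc_scale_add affine_map_def algebra_simps)
qed

lemma centroid6_chamber_map:
  "centroid6 (chamber_map (affine_map Q g) t) =
    (6 * fst g + fst (lattice_map Q (centroid6 t)), 6 * snd g + snd (lattice_map Q (centroid6 t)))"
  by (cases t) (simp add: centroid6_def chamber_map_def affine_map_def lattice_map_def algebra_simps)

text \<open>The open triangle with corners 0, (S, 0) and (S/2, S/2); for S = 6 l it is the triangle
  GC(l,0) in the coordinates of centroid6.\<close>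

definition in_wedge :: "int \<Rightarrow> pt \<Rightarrow> bool" where
  "in_wedge S c \<longleftrightarrow> snd c > 0 \<and> fst c > snd c \<and> fst c + snd c < S"

lemma lattice_map_in_wedge_bound:
  "d \<in> set chamber_shapes \<Longrightarrow> in_wedge S c \<Longrightarrow>
    \<bar>fst (lattice_map d c)\<bar> < S \<and> \<bar>snd (lattice_map d c)\<bar> < S \<and> \<bar>fst (lattice_map d c) + snd (lattice_map d c)\<bar> < S"
  unfolding in_wedge_def by (drule chamber_shapes_cases) (elim disjE; simp add: lattice_map_def; linarith)

lemma lattice_map_in_wedge_eq:
  "d \<in> set chamber_shapes \<Longrightarrow> d' \<in> set chamber_shapes \<Longrightarrow> in_wedge S c \<Longrightarrow> in_wedge S c' \<Longrightarrow>
    lattice_map d c = lattice_map d' c' \<Longrightarrow> d = d'"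
  unfolding in_wedge_def
  by (drule chamber_shapes_cases)+ (elim disjE; simp add: lattice_map_def prod_eq_iff; linarith)

lemma abs_mult_less_double:
  assumes "(S::int) > 0" "\<bar>S * n\<bar> < 2 * S"
  shows "\<bar>n\<bar> \<le> 1"
proof (rule ccontr)
  assume "\<not> \<bar>n\<bar> \<le> 1" hence "\<bar>n\<bar> \<ge> 2" by simp
  hence "S * 2 \<le> S * \<bar>n\<bar>" using assms(1) by (intro mult_left_mono) auto
  thus False using assms by (simp add: abs_mult)
qed

text \<open>Around the points S * f for face centres f, the twelve images of the wedge under the shapes
  tile the plane without overlaps.\<close>

lemma scaled_tiles_disjoint:
  assumes "S > 0" "face_centre f" "face_centre f'" "d \<in> set chamber_shapes" "d' \<in> set chamber_shapes"
    "in_wedge S c" "in_wedge S c'"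
    "S * fst f + fst (lattice_map d c) = S * fst f' + fst (lattice_map d' c')"
    "S * snd f + snd (lattice_map d c) = S * snd f' + snd (lattice_map d' c')"
  shows "f = f' \<and> d = d'"
proof -
  define a where "a = fst f - fst f'"
  define b where "b = snd f - snd f'"
  note B = lattice_map_in_wedge_bound[OF assms(4,6)] and B' = lattice_map_in_wedge_bound[OF assms(5,7)]
  have ea: "S * a = fst (lattice_map d' c') - fst (lattice_map d c)"
    using assms(8) unfolding a_def by (simp add: algebra_simps)
  have eb: "S * b = snd (lattice_map d' c') - snd (lattice_map d c)"
    using assms(9) unfolding b_def by (simp add: algebra_simps)
  have "\<bar>S * a\<bar> < 2 * S" using ea B B' by linarith
  hence a1: "\<bar>a\<bar> \<le> 1" by (rule abs_mult_less_double[OF assms(1)])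
  have "\<bar>S * b\<bar> < 2 * S" using eb B B' by linarith
  hence b1: "\<bar>b\<bar> \<le> 1" by (rule abs_mult_less_double[OF assms(1)])
  have "S * (a + b) =
      (fst (lattice_map d' c') + snd (lattice_map d' c')) - (fst (lattice_map d c) + snd (lattice_map d c))"
    using ea eb by (simp add: algebra_simps)
  hence "\<bar>S * (a + b)\<bar> < 2 * S" using B B' by linarith
  hence ab1: "\<bar>a + b\<bar> \<le> 1" by (rule abs_mult_less_double[OF assms(1)])
  have "face_centre (f - f')" by (rule face_centre_diff[OF assms(2,3)])
  hence "(a - b) mod 3 = 0" unfolding a_def b_def by (simp add: face_centre_def)
  hence "a = 0 \<and> b = 0" using a1 b1 ab1 by presburger
  hence ff: "f = f'" unfolding a_def b_def by (simp add: prod_eq_iff)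
  have "lattice_map d c = lattice_map d' c'" using assms(8,9) ff by (simp add: prod_eq_iff)
  thus ?thesis using ff lattice_map_in_wedge_eq[OF assms(4,5,6,7)] by simp
qed

lemma gc11_shape_lattice_map:
  "d \<in> set chamber_shapes \<Longrightarrow>
    (2 * fst (lattice_map (gc11_shape d) c) + snd (lattice_map (gc11_shape d) c),
     - fst (lattice_map (gc11_shape d) c) + snd (lattice_map (gc11_shape d) c)) =
    lattice_map d (2 * fst c + snd c, - fst c + snd c)"
  by (drule chamber_shapes_cases) (elim disjE; simp add: gc11_shape_def lattice_map_def algebra_simps)

lemma gc_place_base_unique:
  assumes "m = 0 \<or> m = l" "l \<ge> 1" "hex_chamber u1" "hex_chamber u2" "gc_chamber l m t1" "gc_chamber l m t2"
    "gc_place l m u1 t1 = gc_place l m u2 t2"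
  shows "u1 = u2"
proof -
  from assms(3) obtain f1 d1 where u1: "u1 = chamber_at f1 d1" "face_centre f1" "d1 \<in> set chamber_shapes"
    by (rule hex_chamberE)
  from assms(4) obtain f2 d2 where u2: "u2 = chamber_at f2 d2" "face_centre f2" "d2 \<in> set chamber_shapes"
    by (rule hex_chamberE)
  define c1 where "c1 = centroid6 t1"
  define c2 where "c2 = centroid6 t2"
  have s1: "\<forall>k<3. side_fn l m k c1 > 0" using assms(5) gc_chamber_iff[OF assms(1,2)] c1_def by auto
  have s2: "\<forall>k<3. side_fn l m k c2 > 0" using assms(6) gc_chamber_iff[OF assms(1,2)] c2_def by auto
  have ce: "centroid6 (gc_place l m u1 t1) = centroid6 (gc_place l m u2 t2)" using assms(7) by simp
  hence ce': "(6 * fst (gc_scale l m f1) + fst (lattice_map (gc_shape m d1) c1),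
      6 * snd (gc_scale l m f1) + snd (lattice_map (gc_shape m d1) c1)) =
    (6 * fst (gc_scale l m f2) + fst (lattice_map (gc_shape m d2) c2),
      6 * snd (gc_scale l m f2) + snd (lattice_map (gc_shape m d2) c2))"
    unfolding u1(1) u2(1) gc_place_chamber_at centroid6_chamber_map c1_def c2_def .
  have "f1 = f2 \<and> d1 = d2"
  proof (cases "m = 0")
    case True
    have o1: "in_wedge (6 * int l) c1" using s1 True unfolding in_wedge_def all_less_3 side_fn_def by auto
    have o2: "in_wedge (6 * int l) c2" using s2 True unfolding in_wedge_def all_less_3 side_fn_def by auto
    show ?thesis
      by (rule scaled_tiles_disjoint[OF _ u1(2) u2(2) u1(3) u2(3) o1 o2])
        (use assms(2) ce' True in \<open>simp_all add: gc_scale_def gc_shape_def algebra_simps\<close>)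
  next
    case False
    text \<open>J is 3 times the inverse of gc11_map and turns the case m = l into GC(3 l, 0).\<close>
    define J where "J = (\<lambda>c::pt. (2 * fst c + snd c, - fst c + snd c))"
    have o1: "in_wedge (18 * int l) (J c1)"
      using s1 False unfolding in_wedge_def all_less_3 side_fn_def J_def by auto
    have o2: "in_wedge (18 * int l) (J c2)"
      using s2 False unfolding in_wedge_def all_less_3 side_fn_def J_def by auto
    have j1: "J (lattice_map (gc11_shape d1) c1) = lattice_map d1 (J c1)"
      unfolding J_def by (rule gc11_shape_lattice_map[OF u1(3)])
    have j2: "J (lattice_map (gc11_shape d2) c2) = lattice_map d2 (J c2)"
      unfolding J_def by (rule gc11_shape_lattice_map[OF u2(3)])
    have "J (6 * fst (gc_scale l m f1) + fst (lattice_map (gc_shape m d1) c1),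
        6 * snd (gc_scale l m f1) + snd (lattice_map (gc_shape m d1) c1)) =
      J (6 * fst (gc_scale l m f2) + fst (lattice_map (gc_shape m d2) c2),
        6 * snd (gc_scale l m f2) + snd (lattice_map (gc_shape m d2) c2))"
      using ce' by simp
    then have "(18 * int l * fst f1 + fst (J (lattice_map (gc11_shape d1) c1)),
        18 * int l * snd f1 + snd (J (lattice_map (gc11_shape d1) c1))) =
      (18 * int l * fst f2 + fst (J (lattice_map (gc11_shape d2) c2)),
        18 * int l * snd f2 + snd (J (lattice_map (gc11_shape d2) c2)))"
      using False unfolding J_def by (simp add: gc_scale_def gc_shape_def gc11_map_def algebra_simps)
    note e = this
    show ?thesis
      by (rule scaled_tiles_disjoint[OF _ u1(2) u2(2) u1(3) u2(3) o1 o2]) (use assms(2) e j1 j2 in \<open>simp_all\<close>)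
  qed
  thus ?thesis using u1(1) u2(1) by simp
qed

lemma lattice_map_inj:
  "Q \<in> set chamber_shapes \<Longrightarrow> lattice_map Q p = lattice_map Q p' \<Longrightarrow> p = p'"
  by (drule chamber_shapes_cases) (elim disjE; simp add: lattice_map_def prod_eq_iff; linarith)

lemma gc_place_inj:
  assumes "hex_chamber u" "gc_place l m u t1 = gc_place l m u t2"
  shows "t1 = t2"
proof -
  from assms(1) obtain f d where u: "u = chamber_at f d" "face_centre f" "d \<in> set chamber_shapes"
    by (rule hex_chamberE)
  have Q: "gc_shape m d \<in> set chamber_shapes" by (rule gc_shape_in[OF u(3)])
  obtain a b c where t1: "t1 = (a, b, c)" by (cases t1) auto
  obtain a' b' c' where t2: "t2 = (a', b', c')" by (cases t2) auto
  have "lattice_map (gc_shape m d) a = lattice_map (gc_shape m d) a'"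
    "lattice_map (gc_shape m d) b = lattice_map (gc_shape m d) b'"
    "lattice_map (gc_shape m d) c = lattice_map (gc_shape m d) c'"
    using assms(2)
      unfolding u(1) gc_place_chamber_at t1 t2 by (simp_all add: chamber_map_def affine_map_def prod_eq_iff)
  thus ?thesis unfolding t1 t2 using lattice_map_inj[OF Q] by blast
qed

lemma centroid6_chamber_at_bound:
  "d \<in> set chamber_shapes \<Longrightarrow>
    \<bar>fst (centroid6 (chamber_at f d)) - 6 * fst f\<bar> \<le> 4 \<and> \<bar>snd (centroid6 (chamber_at f d)) - 6 * snd f\<bar> \<le> 4"
  by (drule chamber_shapes_cases) (elim disjE; simp add: centroid6_def chamber_at_def)

lemma finite_gc_chambers:
  assumes "m = 0 \<or> m = l" "l \<ge> 1"
  shows "finite {t. gc_chamber l m t}"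
proof -
  define B where "B = {-1 .. 3 * int l + 1}"
  have "{t. gc_chamber l m t} \<subseteq> (\<lambda>(f, d). chamber_at f d) ` ((B \<times> B) \<times> set chamber_shapes)"
  proof
    fix t assume "t \<in> {t. gc_chamber l m t}"
    hence g: "hex_chamber t" "\<forall>k<3. side_fn l m k (centroid6 t) > 0"
      using gc_chamber_iff[OF assms] by auto
    from g(1) obtain f d where t: "t = chamber_at f d" "face_centre f" "d \<in> set chamber_shapes"
      by (rule hex_chamberE)
    have c: "0 < fst (centroid6 t) \<and> fst (centroid6 t) < 18 * int l \<and>
        0 < snd (centroid6 t) \<and> snd (centroid6 t) < 18 * int l"
    proof (cases "m = 0")
      case True thus ?thesis using g(2) unfolding all_less_3 side_fn_def by auto
    next
      case False thus ?thesis using g(2) unfolding all_less_3 side_fn_def by auto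
    qed
    have "fst f \<in> B \<and> snd f \<in> B"
      using c centroid6_chamber_at_bound[OF t(3), of f] unfolding t(1) B_def by auto
    thus "t \<in> (\<lambda>(f, d). chamber_at f d) ` ((B \<times> B) \<times> set chamber_shapes)"
      using t by (auto intro!: image_eqI[of _ _ "(f, d)"] simp: mem_Times_iff)
  qed
  moreover have "finite ((\<lambda>(f, d). chamber_at f d) ` ((B \<times> B) \<times> set chamber_shapes))"
    unfolding B_def by auto
  ultimately show ?thesis by (rule finite_subset)
qed

section \<open>Automorphisms of GC(l,m)(P)\<close>

lemma finite_map_aut: "finite G \<Longrightarrow> finite (map_aut G rr)"
  by (rule finite_subset[OF _ finite_permutations[of G]]) (auto simp: map_aut_def intro: bij_imp_permutes)

locale gc_hexagonal_map = hexagonal_map F r for F :: "'a set" and r +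
  fixes l m :: nat
  assumes lm: "m = 0 \<or> m = l" and l1: "l \<ge> 1"
begin

definition gc_placed :: "hch \<Rightarrow> hch \<Rightarrow> hch \<Rightarrow> bool" where
  "gc_placed u t s \<longleftrightarrow> hex_chamber u \<and> gc_chamber l m t \<and> gc_place l m u t = s"

text \<open>The chambers of the retiled T_H cover the flags of GC(l,m)(P): the chamber at position t of
  the copy of the triangle glued into u goes to (develop u, t).\<close>

definition gc_project :: "hch \<Rightarrow> 'a \<times> hch" where
  "gc_project s = (case (SOME p. gc_placed (fst p) (snd p) s) of (u, t) \<Rightarrow> (develop u, t))"

lemma gc_placed_unique:
  "gc_placed u t s \<Longrightarrow> gc_placed u' t' s \<Longrightarrow> u = u' \<and> t = t'"
proof -
  assume a: "gc_placed u t s" "gc_placed u' t' s"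
  have uu: "u = u'" using gc_place_base_unique[OF lm l1] a unfolding gc_placed_def by metis
  have "gc_place l m u t = gc_place l m u t'" using a uu unfolding gc_placed_def by simp
  hence "t = t'" using gc_place_inj a(1) unfolding gc_placed_def by blast
  thus ?thesis using uu by simp
qed

lemma gc_project_eq:
  assumes "gc_placed u t s"
  shows "gc_project s = (develop u, t)"
proof -
  have ex: "\<exists>p. gc_placed (fst p) (snd p) s" using assms by (intro exI[of _ "(u, t)"]) simp
  obtain u' t' where p: "(SOME p. gc_placed (fst p) (snd p) s) = (u', t')" by (cases "SOME p. gc_placed (fst p) (snd p) s")
  have "gc_placed u' t' s" using someI_ex[OF ex] p by simp
  hence "u' = u \<and> t' = t" using gc_placed_unique assms by blast
  thus ?thesis unfolding gc_project_def p by simp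
qed

definition wall_side :: "nat \<Rightarrow> hch \<Rightarrow> nat" where
  "wall_side i t = (if wall_on_side l m i t 0 then 0 else if wall_on_side l m i t 1 then 1 else 2)"

lemma gc_r_eq:
  "gc_r l m r i (c, t) = (if gc_chamber l m (hex_refl i t) then (c, hex_refl i t) else (r (wall_side i t) c, t))"
  by (simp add: gc_r_def wall_side_def Let_def)

lemma wall_side_wall:
  assumes "gc_chamber l m t" "\<not> gc_chamber l m (hex_refl i t)" "i < 3"
  shows "wall_side i t < 3 \<and> wall_on_side l m i t (wall_side i t)"
proof -
  obtain k where k: "k < 3" "wall_on_side l m i t k" using exists_wall_on_side[OF assms lm l1] by blast
  have "k = 0 \<or> k = 1 \<or> k = 2" using k(1) by auto
  thus ?thesis using k(2) unfolding wall_side_def by auto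
qed

lemma gc_placed_hex_refl:
  assumes "gc_placed u t s" "i < 3"
  shows "(gc_chamber l m (hex_refl i t) \<and> gc_placed u (hex_refl i t) (hex_refl i s)) \<or>
         (\<not> gc_chamber l m (hex_refl i t) \<and> gc_placed (hex_refl (wall_side i t) u) t (hex_refl i s))"
proof (cases "gc_chamber l m (hex_refl i t)")
  case True
  thus ?thesis using assms gc_place_hex_refl[OF assms(2)] unfolding gc_placed_def by simp
next
  case False
  have c: "hex_chamber u" "gc_chamber l m t" "gc_place l m u t = s"
    using assms(1) unfolding gc_placed_def by auto
  have ht: "hex_chamber t" using c(2) gc_chamber_def by blast
  have sk: "wall_side i t < 3" "wall_on_side l m i t (wall_side i t)"
    using wall_side_wall[OF c(2) False assms(2)] by auto
  have "gc_place l m (hex_refl (wall_side i t) u) t = hex_refl i s"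
    using gc_place_glue[OF c(1) ht assms(2) sk(1) lm l1 sk(2)] c(3) by simp
  thus ?thesis using False c hex_chamber_refl[OF c(1) sk(1)] unfolding gc_placed_def by simp
qed

lemma gc_project_refl:
  assumes "gc_placed u t s" "i < 3"
  shows "gc_project (hex_refl i s) = gc_r l m r i (gc_project s)"
proof -
  note es = gc_project_eq[OF assms(1)]
  from gc_placed_hex_refl[OF assms] show ?thesis
  proof
    assume a: "gc_chamber l m (hex_refl i t) \<and> gc_placed u (hex_refl i t) (hex_refl i s)"
    show ?thesis unfolding es gc_r_eq gc_project_eq[OF a[THEN conjunct2]] using a by simp
  next
    assume a: "\<not> gc_chamber l m (hex_refl i t) \<and> gc_placed (hex_refl (wall_side i t) u) t (hex_refl i s)"
    have c: "hex_chamber u" "gc_chamber l m t" using assms(1) unfolding gc_placed_def by auto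
    have sk: "wall_side i t < 3" using wall_side_wall[OF c(2) _ assms(2)] a by blast
    show ?thesis
      unfolding es gc_r_eq gc_project_eq[OF a[THEN conjunct2]] using a develop_refl[OF c(1) sk] by simp
  qed
qed

definition base_position :: hch where
  "base_position = (if m = 0 then base_chamber else chamber_at 0 ((0, 1), (1, 0)))"

lemma gc_chamber_base_position: "gc_chamber l m base_position"
proof -
  have l0: "int l \<ge> 1" using l1 by simp
  show ?thesis
  proof (cases "m = 0")
    case True
    show ?thesis unfolding gc_chamber_iff[OF lm l1] base_position_def using True base_chamber_hex l0
      by (simp add: all_less_3 side_fn_def base_chamber_def chamber_at_def centroid6_def)
  next
    case False
    have h: "hex_chamber (chamber_at 0 ((0,1),(1,0)))"
      by (simp add: hex_chamber_at_iff chamber_shapes_def face_centre_def)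
    show ?thesis unfolding gc_chamber_iff[OF lm l1] base_position_def using False h l0
      by (simp add: all_less_3 side_fn_def centroid6_def) (simp add: chamber_at_def)
  qed
qed

lemma gc_place_base_chamber: "gc_place l m base_chamber t = t"
proof -
  have "gc_shape m ((1,0),(0,1)) = unit_shape" by (simp add: gc_shape_def gc11_shape_def unit_shape_def)
  moreover have "gc_scale l m 0 = 0" by (simp add: gc_scale_def gc11_map_def zero_prod_def)
  moreover have "affine_map unit_shape 0 = id"
    by (rule ext) (simp add: affine_map_def unit_shape_def lattice_map_def)
  ultimately show ?thesis
    unfolding base_chamber_def gc_place_chamber_at by (cases t) (simp add: chamber_map_def)
qed

lemma gc_placed_base: "gc_placed base_chamber base_position base_position"
  unfolding gc_placed_def using base_chamber_hex gc_chamber_base_position gc_place_base_chamber by simp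

lemma gc_placed_exists:
  assumes "hex_chamber s"
  shows "\<exists>u t. gc_placed u t s"
proof (rule hex_chamber_induct[where P="\<lambda>s. \<exists>u t. gc_placed u t s", OF _ _ _ assms])
  show "hex_chamber base_position" using gc_chamber_base_position gc_chamber_def by blast
  show "\<exists>u t. gc_placed u t base_position" using gc_placed_base by blast
next
  fix s and i :: nat assume a: "hex_chamber s" "i < 3" "\<exists>u t. gc_placed u t s"
  then obtain u t where c: "gc_placed u t s" by blast
  from gc_placed_hex_refl[OF c a(2)] show "\<exists>u t. gc_placed u t (hex_refl i s)" by blast
qed

lemma hex_chamber_if_gc_placed: "gc_placed u t s \<Longrightarrow> hex_chamber s"
  unfolding gc_placed_def using hex_chamber_gc_place gc_chamber_def by blast

lemma gc_project_in: "hex_chamber s \<Longrightarrow> gc_project s \<in> gc_flags l m F"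
proof -
  assume "hex_chamber s"
  then obtain u t where c: "gc_placed u t s" using gc_placed_exists by blast
  show ?thesis unfolding gc_project_eq[OF c] gc_flags_def using c develop_in unfolding gc_placed_def by auto
qed

lemma gc_project_surj:
  assumes "X \<in> gc_flags l m F"
  shows "\<exists>s. hex_chamber s \<and> gc_project s = X"
proof -
  obtain c t where X: "X = (c, t)" "c \<in> F" "gc_chamber l m t" using assms unfolding gc_flags_def by auto
  obtain u where u: "hex_chamber u" "develop u = c"
    using develop_surj[OF X(2)] by blast
  have cv: "gc_placed u t (gc_place l m u t)" unfolding gc_placed_def using u X by simp
  show ?thesis using gc_project_eq[OF cv] hex_chamber_if_gc_placed[OF cv] u X by blast
qed

lemma gc_placed_transl:
  assumes "gc_placed u t s" "face_centre a"
  shows "gc_placed (chamber_map (transl a) u) t (chamber_map (transl (gc_scale l m a)) s)"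
  using assms hex_chamber_transl gc_place_transl unfolding gc_placed_def by auto

lemma gc_project_transl_cong:
  assumes "hex_chamber s1" "hex_chamber s2" "gc_project s1 = gc_project s2" "face_centre b"
  shows "gc_project (chamber_map (transl b) s1) = gc_project (chamber_map (transl b) s2)"
proof -
  obtain u1 t1 where c1: "gc_placed u1 t1 s1" using gc_placed_exists[OF assms(1)] by blast
  obtain u2 t2 where c2: "gc_placed u2 t2 s2" using gc_placed_exists[OF assms(2)] by blast
  have eq: "develop u1 = develop u2" "t1 = t2"
    using assms(3) gc_project_eq[OF c1] gc_project_eq[OF c2] by auto
  have hu: "hex_chamber u1" "hex_chamber u2" using c1 c2 unfolding gc_placed_def by auto
  obtain g where g: "face_centre g" "u2 = chamber_map (transl g) u1"
    "\<And>t. hex_chamber t \<Longrightarrow> develop (chamber_map (transl g) t) = develop t"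
    using develop_deck_transformation[OF hu eq(1)] by blast
  have s2: "s2 = chamber_map (transl (gc_scale l m g)) s1"
  proof -
    have "gc_placed u2 t1 (chamber_map (transl (gc_scale l m g)) s1)"
      using gc_placed_transl[OF c1 g(1)] g(2) by simp
    thus ?thesis using c2 eq(2) unfolding gc_placed_def by auto
  qed
  have hb: "hex_chamber (chamber_map (transl b) s1)" by (rule hex_chamber_transl[OF assms(4,1)])
  obtain u' t' where c': "gc_placed u' t' (chamber_map (transl b) s1)" using gc_placed_exists[OF hb] by blast
  have c'': "gc_placed (chamber_map (transl g) u') t' (chamber_map (transl b) s2)"
    using gc_placed_transl[OF c' g(1)] unfolding s2 chamber_map_transl_commute[of b] by simp
  have hu': "hex_chamber u'" using c' unfolding gc_placed_def by simp
  have "develop (chamber_map (transl g) u') = develop u'" using g(3) hu' by blast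
  thus ?thesis unfolding gc_project_eq[OF c'] gc_project_eq[OF c''] by simp
qed

text \<open>The automorphism of GC(l,m)(P) induced by the translation of T_H by b; it is well defined
  because deck transformations are translations, which commute with it.\<close>

definition gc_transl_aut :: "pt \<Rightarrow> 'a \<times> hch \<Rightarrow> 'a \<times> hch" where
  "gc_transl_aut b X =
     (if X \<in> gc_flags l m F then gc_project (chamber_map (transl b) (SOME s. hex_chamber s \<and> gc_project s = X))
      else X)"

lemma gc_transl_aut_project:
  assumes "hex_chamber s" "face_centre b"
  shows "gc_transl_aut b (gc_project s) = gc_project (chamber_map (transl b) s)"
proof -
  have ex: "\<exists>s'. hex_chamber s' \<and> gc_project s' = gc_project s" using assms(1) by blast
  define s' where "s' = (SOME s'. hex_chamber s' \<and> gc_project s' = gc_project s)"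
  have s': "hex_chamber s'" "gc_project s' = gc_project s" using someI_ex[OF ex] unfolding s'_def by auto
  have "gc_transl_aut b (gc_project s) = gc_project (chamber_map (transl b) s')"
    unfolding gc_transl_aut_def s'_def using gc_project_in[OF assms(1)] by simp
  also have "\<dots> = gc_project (chamber_map (transl b) s)"
    by (rule gc_project_transl_cong[OF s'(1) assms(1) s'(2) assms(2)])
  finally show ?thesis .
qed

lemma gc_transl_aut_in_gc_flags:
  assumes "X \<in> gc_flags l m F" "face_centre b"
  shows "gc_transl_aut b X \<in> gc_flags l m F"
proof -
  obtain s where s: "hex_chamber s" "gc_project s = X"
    using gc_project_surj[OF assms(1)] by blast
  show ?thesis
    using gc_transl_aut_project[OF s(1) assms(2)] s gc_project_in[OF hex_chamber_transl[OF assms(2) s(1)]] by simp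
qed

lemma gc_transl_aut_uminus:
  assumes "X \<in> gc_flags l m F" "face_centre b"
  shows "gc_transl_aut (- b) (gc_transl_aut b X) = X"
proof -
  obtain s where s: "hex_chamber s" "gc_project s = X"
    using gc_project_surj[OF assms(1)] by blast
  show ?thesis
    using gc_transl_aut_project[OF s(1) assms(2)] s chamber_map_transl_uminus
      gc_transl_aut_project[OF hex_chamber_transl[OF assms(2) s(1)] face_centre_uminus[OF assms(2)]]
    by simp
qed

lemma gc_transl_aut_gc_r:
  assumes "X \<in> gc_flags l m F" "face_centre b" "i < 3"
  shows "gc_transl_aut b (gc_r l m r i X) = gc_r l m r i (gc_transl_aut b X)"
proof -
  obtain s where s: "hex_chamber s" "gc_project s = X"
    using gc_project_surj[OF assms(1)] by blast
  obtain u t where c: "gc_placed u t s"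
    using gc_placed_exists[OF s(1)] by blast
  obtain u' t' where c': "gc_placed u' t' (chamber_map (transl b) s)"
    using gc_placed_exists[OF hex_chamber_transl[OF assms(2) s(1)]] by blast
  have "gc_transl_aut b (gc_r l m r i X) = gc_transl_aut b (gc_project (hex_refl i s))"
    using gc_project_refl[OF c assms(3)] s by simp
  also have "\<dots> = gc_project (chamber_map (transl b) (hex_refl i s))"
    by (rule gc_transl_aut_project[OF hex_chamber_refl[OF s(1) assms(3)] assms(2)])
  also have "\<dots> = gc_project (hex_refl i (chamber_map (transl b) s))"
    using hex_refl_chamber_map_transl[OF assms(3)] by simp
  also have "\<dots> = gc_r l m r i (gc_project (chamber_map (transl b) s))"
    by (rule gc_project_refl[OF c' assms(3)])
  also have "\<dots> = gc_r l m r i (gc_transl_aut b X)"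
    using gc_transl_aut_project[OF s(1) assms(2)] s by simp
  finally show ?thesis .
qed

lemma gc_transl_aut_in:
  assumes "face_centre b"
  shows "gc_transl_aut b \<in> map_aut (gc_flags l m F) (gc_r l m r)"
proof -
  have "bij_betw (gc_transl_aut b) (gc_flags l m F) (gc_flags l m F)"
  proof (rule bij_betw_byWitness[where f' = "gc_transl_aut (- b)"])
    show "\<forall>X\<in>gc_flags l m F. gc_transl_aut (- b) (gc_transl_aut b X) = X"
      using gc_transl_aut_uminus assms by blast
    show "\<forall>X\<in>gc_flags l m F. gc_transl_aut b (gc_transl_aut (- b) X) = X"
      using gc_transl_aut_uminus[of _ "- b"] face_centre_uminus[OF assms] by simp
    show "gc_transl_aut b ` gc_flags l m F \<subseteq> gc_flags l m F"
      using gc_transl_aut_in_gc_flags assms by blast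
    show "gc_transl_aut (- b) ` gc_flags l m F \<subseteq> gc_flags l m F"
      using gc_transl_aut_in_gc_flags face_centre_uminus[OF assms] by blast
  qed
  moreover have "gc_transl_aut b X = X" if "X \<notin> gc_flags l m F" for X
    using that unfolding gc_transl_aut_def by simp
  ultimately show ?thesis
    unfolding map_aut_def using gc_transl_aut_gc_r assms by blast
qed

lemma gc_project_base: "gc_project base_position = (develop base_chamber, base_position)"
  by (rule gc_project_eq[OF gc_placed_base])

lemma hex_chamber_base_position: "hex_chamber base_position"
  using gc_chamber_base_position gc_chamber_def by blast

lemma face_centre_1_1: "face_centre (1,1)"
  by (simp add: face_centre_def)

lemma gc_transl_aut_moves_base:
  assumes "(l, m) \<noteq> (1, 0)"
  shows "snd (gc_transl_aut (1,1) (develop base_chamber, base_position)) \<noteq> base_position"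
proof
  assume a: "snd (gc_transl_aut (1,1) (develop base_chamber, base_position)) = base_position"
  have ht: "hex_chamber (chamber_map (transl (1,1)) base_position)"
    by (rule hex_chamber_transl[OF face_centre_1_1 hex_chamber_base_position])
  obtain u' t' where c: "gc_placed u' t' (chamber_map (transl (1,1)) base_position)"
    using gc_placed_exists[OF ht] by blast
  have "gc_transl_aut (1,1) (develop base_chamber, base_position) = (develop u', t')"
    using gc_transl_aut_project[OF hex_chamber_base_position face_centre_1_1] gc_project_base gc_project_eq[OF c] by simp
  hence tt: "t' = base_position" using a by simp
  have hu: "hex_chamber u'" using c unfolding gc_placed_def by simp
  from hu obtain f d where u: "u' = chamber_at f d" "face_centre f" "d \<in> set chamber_shapes"
    by (rule hex_chamberE)
  have "gc_place l m u' base_position = chamber_map (transl (1,1)) base_position"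
    using c tt unfolding gc_placed_def by simp
  hence "snd (snd (gc_place l m u' base_position)) = snd (snd (chamber_map (transl (1,1)) base_position))"
    by simp
  moreover have "snd (snd base_position) = 0" by (simp add: base_position_def base_chamber_def chamber_at_def)
  moreover have "snd (snd (chamber_map h t)) = h (snd (snd t))" for h t
    by (cases t) (simp add: chamber_map_def)
  ultimately have "affine_map (gc_shape m d) (gc_scale l m f) 0 = transl (1,1) 0"
    unfolding u(1) gc_place_chamber_at by simp
  hence g: "gc_scale l m f = (1,1)" by (simp add: affine_map_def lattice_map_def zero_prod_def[symmetric])
  show False
  proof (cases "m = 0")
    case True
    have "int l * fst f = 1" using g True by (simp add: gc_scale_def)
    hence "int l = 1" by (simp add: zmult_eq_1_iff)
    thus False using assms True by simp
  next
    case False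
    have e: "int l * (fst f - snd f) = 1" "int l * (fst f + 2 * snd f) = 1"
      using g False by (simp_all add: gc_scale_def gc11_map_def)
    hence "fst f - snd f = 1" by (simp add: zmult_eq_1_iff)
    thus False using u(2) by (simp add: face_centre_def)
  qed
qed

definition gc_lift :: "('a \<Rightarrow> 'a) \<Rightarrow> 'a \<times> hch \<Rightarrow> 'a \<times> hch" where
  "gc_lift \<phi> X = (if X \<in> gc_flags l m F then (\<phi> (fst X), snd X) else X)"

lemma gc_lift_in:
  assumes "\<phi> \<in> map_aut F r"
  shows "gc_lift \<phi> \<in> map_aut (gc_flags l m F) (gc_r l m r)"
proof -
  let ?G = "gc_flags l m F"
  have bj: "bij_betw \<phi> F F" and cm: "\<And>x i. x \<in> F \<Longrightarrow> i < 3 \<Longrightarrow> \<phi> (r i x) = r i (\<phi> x)"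
    using assms unfolding map_aut_def by auto
  have bij: "bij_betw (gc_lift \<phi>) ?G ?G"
  proof -
    have b1: "bij_betw (map_prod \<phi> id) (F \<times> {t. gc_chamber l m t}) (F \<times> {t. gc_chamber l m t})"
      by (rule bij_betw_map_prod[OF bj bij_betw_id])
    have "\<And>X. X \<in> ?G \<Longrightarrow> gc_lift \<phi> X = map_prod \<phi> id X"
      unfolding gc_lift_def by (auto simp: map_prod_def split: prod.splits)
    hence "bij_betw (gc_lift \<phi>) ?G ?G = bij_betw (map_prod \<phi> id) ?G ?G" by (rule bij_betw_cong)
    thus ?thesis using b1 unfolding gc_flags_def by simp
  qed
  have comm: "gc_lift \<phi> (gc_r l m r i X) = gc_r l m r i (gc_lift \<phi> X)" if X: "X \<in> ?G" and i: "i < 3" for X i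
  proof -
    obtain c t where Xe: "X = (c, t)" "c \<in> F" "gc_chamber l m t" using X unfolding gc_flags_def by auto
    show ?thesis
    proof (cases "gc_chamber l m (hex_refl i t)")
      case True
      have "(c, hex_refl i t) \<in> ?G" using Xe True unfolding gc_flags_def by simp
      moreover have "(\<phi> c, hex_refl i t) = gc_r l m r i (\<phi> c, t)" using True by (simp add: gc_r_eq)
      ultimately show ?thesis unfolding Xe(1) gc_lift_def using X Xe True by (simp add: gc_r_eq)
    next
      case False
      have sk: "wall_side i t < 3" using wall_side_wall[OF Xe(3) False i] by simp
      have "(r (wall_side i t) c, t) \<in> ?G" using Xe r_in[OF sk] unfolding gc_flags_def by simp
      thus ?thesis unfolding Xe(1) gc_lift_def using X Xe False cm[OF Xe(2) sk] by (simp add: gc_r_eq)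
    qed
  qed
  have out: "gc_lift \<phi> X = X" if "X \<notin> ?G" for X using that unfolding gc_lift_def by simp
  show ?thesis unfolding map_aut_def using bij comm out by blast
qed

lemma inj_on_gc_lift: "inj_on gc_lift (map_aut F r)"
proof (rule inj_onI)
  fix \<phi> \<psi> assume a: "\<phi> \<in> map_aut F r" "\<psi> \<in> map_aut F r" "gc_lift \<phi> = gc_lift \<psi>"
  show "\<phi> = \<psi>"
  proof (rule ext)
    fix x show "\<phi> x = \<psi> x"
    proof (cases "x \<in> F")
      case True
      have "(x, base_position) \<in> gc_flags l m F"
        using True gc_chamber_base_position unfolding gc_flags_def by simp
      hence "gc_lift \<phi> (x, base_position) = (\<phi> x, base_position)"
        "gc_lift \<psi> (x, base_position) = (\<psi> x, base_position)"
        unfolding gc_lift_def by simp_all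
      thus ?thesis using a(3) by simp
    next
      case False thus ?thesis using a(1,2) unfolding map_aut_def by simp
    qed
  qed
qed

lemma finite_gc_flags: "finite (gc_flags l m F)"
  unfolding gc_flags_def using finite_flags finite_gc_chambers[OF lm l1] by simp

theorem card_map_aut_less:
  assumes "(l, m) \<noteq> (1, 0)"
  shows "card (map_aut F r) < card (map_aut (gc_flags l m F) (gc_r l m r))"
proof -
  let ?A = "map_aut F r" and ?B = "map_aut (gc_flags l m F) (gc_r l m r)"
  let ?psi = "gc_transl_aut (1,1)"
  have finA: "finite ?A" by (rule finite_map_aut[OF finite_flags])
  have finB: "finite ?B" by (rule finite_map_aut[OF finite_gc_flags])
  have sub: "insert ?psi (gc_lift ` ?A) \<subseteq> ?B"
    using gc_transl_aut_in[OF face_centre_1_1] gc_lift_in by blast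
  have X0: "(develop base_chamber, base_position) \<in> gc_flags l m F"
    using develop_in[OF base_chamber_hex] gc_chamber_base_position unfolding gc_flags_def by simp
  have notin: "?psi \<notin> gc_lift ` ?A"
  proof
    assume "?psi \<in> gc_lift ` ?A"
    then obtain \<phi> where "?psi = gc_lift \<phi>" by blast
    hence "snd (?psi (develop base_chamber, base_position)) = base_position"
      using X0 unfolding gc_lift_def by simp
    thus False using gc_transl_aut_moves_base[OF assms] by simp
  qed
  have "card ?A = card (gc_lift ` ?A)" using card_image[OF inj_on_gc_lift] by simp
  also have "\<dots> < card (insert ?psi (gc_lift ` ?A))" using notin finA by simp
  also have "\<dots> \<le> card ?B" by (rule card_mono[OF finB sub])
  finally show ?thesis .
qed

end

theorem lemma7:
  fixes F :: "'a set" and r :: "nat \<Rightarrow> 'a \<Rightarrow> 'a" and l m :: nat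
  assumes "polyhedral_map F r"
    and "map_genus F r 1"
    and "\<forall>f\<in>map_faces F r. face_size f = 6"
    and "l \<ge> 1"
    and "m = 0 \<or> m = l"
    and "(l, m) \<noteq> (1, 0)"
  shows "card (map_aut F r) < card (map_aut (gc_flags l m F) (gc_r l m r))"
proof -
  interpret hexagonal_map F r
    by (rule hexagonal_map_if_hexagonal_torus[OF assms(1-3)])
  interpret gc_hexagonal_map F r l m
    by unfold_locales (use assms(4,5) in auto)
  show ?thesis
    by (rule card_map_aut_less[OF assms(6)])
qed

end
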